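(* Let $H_1,\dots,H_n$ be finite-dimensional Hilbert spaces and let $E_W$ be the witnessed entanglement on density operators of $H_1\otimes\cdots\otimes H_n$ (defined in the context). Then: (i) for every density operator $\sigma$, $E_W(\sigma)=0$ if and only if $\sigma$ is separable; (ii) for all unitaries $U_k$ on $H_k$ ($k=1,\dots,n$) and every density operator $\sigma$, $E_W(\sigma)=E_W\big((U_1^\dagger\otimes\cdots\otimes U_n^\dagger)\,\sigma\,(U_1\otimes\cdots\otimes U_n)\big)$; (iv) (continuity) for every norm $\|\cdot\|_L$ on the (finite-dimensional) space of operators on $H_1\otimes\cdots\otimes H_n$ there is a real constant $C=C(L)\ge 0$ such that for every $\epsilon\ge 0$ and all density operators $\rho,\sigma$, if $\|\rho-\sigma\|_L\le\epsilon$ then $|E_W(\rho)-E_W(\sigma)|\le C\epsilon$; (v) (convexity) for all density operators $\rho,\sigma$ and all $0\le\lambda\le 1$, $E_W(\lambda\rho+(1-\lambda)\sigma)\le\lambda E_W(\rho)+(1-\lambda)E_W(\sigma)$.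
   Context: A density operator $\sigma$ on $H_1\otimes\cdots\otimes H_n$ is (fully) separable if it is a convex combination of product states $\sigma_1\otimes\cdots\otimes\sigma_n$. An entanglement witness (EW) is a Hermitian operator $W$ on $H_1\otimes\cdots\otimes H_n$ with $\mathrm{Tr}(W\sigma)\ge 0$ for every separable $\sigma$; only normalized witnesses, $\mathrm{Tr}(W)=1$, are considered. An optimal entanglement witness $W_\rho$ for $\rho$ is a normalized EW minimizing $\mathrm{Tr}(W\rho)$ over all normalized EWs $W$. The witnessed entanglement is $E_W(\rho)=\max\{0,-\mathrm{Tr}(W_\rho\rho)\}$, i.e. $E_W(\rho)=\max\{0,-\min_W \mathrm{Tr}(W\rho)\}$ with the minimum over normalized EWs. *)

theory Defs
  imports "Jordan_Normal_Form.Schur_Decomposition"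
begin

text \<open>Finite-dimensional Hilbert spaces H_1,...,H_n are modelled as C^(d_k), given by
  a list dims = [d_1,...,d_n]; operators on H_1 (x) ... (x) H_n are complex
  D x D matrices with D = prod_list dims, the tensor product being the Kronecker product.\<close>

definition mtrace :: "complex mat \<Rightarrow> complex" where
  "mtrace A = (\<Sum>i<dim_row A. A $$ (i,i))"

definition hermitian_mat :: "complex mat \<Rightarrow> bool" where
  "hermitian_mat A \<longleftrightarrow> mat_adjoint A = A"

definition density_op :: "nat \<Rightarrow> complex mat \<Rightarrow> bool" where
  "density_op d \<rho> \<longleftrightarrow> \<rho> \<in> carrier_mat d d \<and> hermitian_mat \<rho>
     \<and> (\<forall>v \<in> carrier_vec d. 0 \<le> Re ((\<rho> *\<^sub>v v) \<bullet>c v))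
     \<and> mtrace \<rho> = 1"

definition unitary_mat :: "nat \<Rightarrow> complex mat \<Rightarrow> bool" where
  "unitary_mat d U \<longleftrightarrow> U \<in> carrier_mat d d \<and> U * mat_adjoint U = 1\<^sub>m d
     \<and> mat_adjoint U * U = 1\<^sub>m d"

definition kron :: "complex mat \<Rightarrow> complex mat \<Rightarrow> complex mat" where
  "kron A B = mat (dim_row A * dim_row B) (dim_col A * dim_col B)
     (\<lambda>(i,j). A $$ (i div dim_row B, j div dim_col B) * B $$ (i mod dim_row B, j mod dim_col B))"

fun kron_list :: "complex mat list \<Rightarrow> complex mat" where
  "kron_list [] = 1\<^sub>m 1"
| "kron_list (A # As) = kron A (kron_list As)"

definition product_state :: "nat list \<Rightarrow> complex mat \<Rightarrow> bool" where
  "product_state dims \<sigma> \<longleftrightarrow> (\<exists>\<sigma>s. length \<sigma>s = length dims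
     \<and> (\<forall>k < length dims. density_op (dims ! k) (\<sigma>s ! k)) \<and> \<sigma> = kron_list \<sigma>s)"

definition separable :: "nat list \<Rightarrow> complex mat \<Rightarrow> bool" where
  "separable dims \<sigma> \<longleftrightarrow> \<sigma> \<in> carrier_mat (prod_list dims) (prod_list dims) \<and>
     (\<exists>(m::nat) (p::nat \<Rightarrow> real) \<tau>. (\<forall>j<m. 0 \<le> p j \<and> product_state dims (\<tau> j))
       \<and> (\<Sum>j<m. p j) = 1
       \<and> (\<forall>a < prod_list dims. \<forall>b < prod_list dims.
            \<sigma> $$ (a,b) = (\<Sum>j<m. complex_of_real (p j) * \<tau> j $$ (a,b))))"

definition entanglement_witness :: "nat list \<Rightarrow> complex mat \<Rightarrow> bool" where
  "entanglement_witness dims W \<longleftrightarrow> W \<in> carrier_mat (prod_list dims) (prod_list dims)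
     \<and> hermitian_mat W \<and> (\<forall>\<sigma>. separable dims \<sigma> \<longrightarrow> 0 \<le> Re (mtrace (W * \<sigma>)))"

definition normalized_EW :: "nat list \<Rightarrow> complex mat \<Rightarrow> bool" where
  "normalized_EW dims W \<longleftrightarrow> entanglement_witness dims W \<and> mtrace W = 1"

text \<open>Witnessed entanglement: max(0, - min over normalized EWs of Tr(W rho)).
  (The minimum is attained; we write it as an infimum.)\<close>
definition witnessed_ent :: "nat list \<Rightarrow> complex mat \<Rightarrow> real" where
  "witnessed_ent dims \<rho> =
     max 0 (- (INF W \<in> {W. normalized_EW dims W}. Re (mtrace (W * \<rho>))))"

definition mat_norm :: "nat \<Rightarrow> (complex mat \<Rightarrow> real) \<Rightarrow> bool" where
  "mat_norm D N \<longleftrightarrow>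
     (\<forall>A \<in> carrier_mat D D. 0 \<le> N A \<and> (N A = 0 \<longleftrightarrow> A = 0\<^sub>m D D))
   \<and> (\<forall>A \<in> carrier_mat D D. \<forall>c. N (c \<cdot>\<^sub>m A) = cmod c * N A)
   \<and> (\<forall>A \<in> carrier_mat D D. \<forall>B \<in> carrier_mat D D. N (A + B) \<le> N A + N B)"

end

theory Submission
  imports Defs "HOL-Computational_Algebra.Fundamental_Theorem_Algebra"
begin

text \<open>
  A witness \<open>W\<close> is nonnegative on product vectors, and an induction over the tensor factors,
  testing with \<open>e\<^sub>p\<close> and \<open>(e\<^sub>p + w e\<^sub>q)/\<surd>2\<close>, bounds every entry of \<open>W\<close> by
  \<open>Tr W\<close>. So for normalized witnesses \<open>\<rho> \<mapsto> Tr(W\<rho>)\<close> is bounded and 1-Lipschitz for the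
  entrywise 1-norm, uniformly in \<open>W\<close>: the infimum defining \<open>E\<^sub>W\<close> is finite, concave and
  Lipschitz, and any norm dominates the entrywise 1-norm by compactness of its unit sphere.
  Conjugation by local unitaries preserves separable states, hence permutes the normalized
  witnesses. Finally, Caratheodory's theorem and compactness of the product states make the
  separable states compact and convex; if \<open>\<sigma>\<close> is not separable, its nearest separable state
  \<open>P\<close> yields the witness \<open>(P - \<sigma>) - c I\<close> with \<open>Tr(W\<sigma>) < 0\<close>, which becomes normalized
  after dividing by its trace, positive by the entry bound.
\<close>

section \<open>Adjoints, traces and Kronecker products\<close>

lemma dim_mat_adjoint [simp]:
  "dim_row (mat_adjoint A) = dim_col A" "dim_col (mat_adjoint A) = dim_row A"
  unfolding mat_adjoint_def by auto

lemma index_mat_adjoint [simp]: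
  "i < dim_col A \<Longrightarrow> j < dim_row A \<Longrightarrow> mat_adjoint A $$ (i,j) = cnj (A $$ (j,i))"
  unfolding mat_adjoint_def by (auto simp: mat_of_rows_def)

lemma mat_adjoint_carrier: "A \<in> carrier_mat n m \<Longrightarrow> mat_adjoint A \<in> carrier_mat m n"
  by auto

lemma mat_adjoint_adjoint:
  fixes A :: "complex mat"
  shows "A \<in> carrier_mat n m \<Longrightarrow> mat_adjoint (mat_adjoint A) = A"
  by (intro eq_matI) auto

lemma index_mult_mat_sum:
  "A \<in> carrier_mat n m \<Longrightarrow> B \<in> carrier_mat m l \<Longrightarrow> i < n \<Longrightarrow> j < l \<Longrightarrow>
   (A * B) $$ (i,j) = (\<Sum>k<m. A $$ (i,k) * B $$ (k,j))"
  by (simp add: scalar_prod_def lessThan_atLeast0)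

lemma mat_adjoint_mult:
  fixes A B :: "complex mat"
  assumes A: "A \<in> carrier_mat n m" and B: "B \<in> carrier_mat m l"
  shows "mat_adjoint (A * B) = mat_adjoint B * mat_adjoint A"
proof (rule eq_matI)
  fix i j assume "i < dim_row (mat_adjoint B * mat_adjoint A)" "j < dim_col (mat_adjoint B * mat_adjoint A)"
  then have i: "i < l" and j: "j < n" using A B by auto
  have "mat_adjoint (A * B) $$ (i,j) = cnj ((A * B) $$ (j,i))"
    using A B i j by simp
  also have "\<dots> = cnj (\<Sum>k<m. A $$ (j,k) * B $$ (k,i))"
    unfolding index_mult_mat_sum[OF A B j i] ..
  also have "\<dots> = (\<Sum>k<m. mat_adjoint B $$ (i,k) * mat_adjoint A $$ (k,j))"
    using i j A B by (auto intro!: sum.cong simp: ac_simps)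
  also have "\<dots> = (mat_adjoint B * mat_adjoint A) $$ (i,j)"
    by (rule sym, rule index_mult_mat_sum[OF mat_adjoint_carrier[OF B] mat_adjoint_carrier[OF A] i j])
  finally show "mat_adjoint (A * B) $$ (i,j) = (mat_adjoint B * mat_adjoint A) $$ (i,j)" .
qed (use A B in auto)

lemma hermitian_mat_iff:
  assumes A: "A \<in> carrier_mat n n"
  shows "hermitian_mat A \<longleftrightarrow> (\<forall>i<n. \<forall>j<n. A $$ (j,i) = cnj (A $$ (i,j)))"
proof
  assume h: "hermitian_mat A"
  show "\<forall>i<n. \<forall>j<n. A $$ (j,i) = cnj (A $$ (i,j))"
  proof (intro allI impI)
    fix i j assume "i < n" "j < n"
    then have "cnj (A $$ (i,j)) = mat_adjoint A $$ (j,i)" using A by simp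
    then show "A $$ (j,i) = cnj (A $$ (i,j))" using h unfolding hermitian_mat_def by simp
  qed
next
  assume h: "\<forall>i<n. \<forall>j<n. A $$ (j,i) = cnj (A $$ (i,j))"
  show "hermitian_mat A" unfolding hermitian_mat_def
  proof (rule eq_matI)
    fix i j assume "i < dim_row A" "j < dim_col A"
    then show "mat_adjoint A $$ (i, j) = A $$ (i, j)" using A h[rule_format, of j i] by simp
  qed (use A in auto)
qed

lemma hermitian_mat_minus:
  assumes "A \<in> carrier_mat n n" "B \<in> carrier_mat n n" "hermitian_mat A" "hermitian_mat B"
  shows "hermitian_mat (A - B)"
proof -
  have "mat_adjoint (A - B) = mat_adjoint A - mat_adjoint B"
    using assms(1,2) by (intro eq_matI) auto
  then show ?thesis using assms(3,4) unfolding hermitian_mat_def by simp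
qed

lemma hermitian_mat_smult_real:
  assumes "A \<in> carrier_mat n n" "hermitian_mat A"
  shows "hermitian_mat (complex_of_real c \<cdot>\<^sub>m A)"
proof -
  have "mat_adjoint (complex_of_real c \<cdot>\<^sub>m A) = complex_of_real c \<cdot>\<^sub>m mat_adjoint A"
    using assms(1) by (intro eq_matI) auto
  then show ?thesis using assms(2) unfolding hermitian_mat_def by simp
qed

lemma hermitian_mat_one: "hermitian_mat (1\<^sub>m n)"
  unfolding hermitian_mat_def by (intro eq_matI) auto

lemma mtrace_mult:
  assumes "A \<in> carrier_mat n n" "B \<in> carrier_mat n n"
  shows "mtrace (A * B) = (\<Sum>i<n. \<Sum>j<n. A $$ (i,j) * B $$ (j,i))"
  using assms unfolding mtrace_def
    by (intro sum.cong) (auto simp: scalar_prod_def lessThan_atLeast0)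

lemma mtrace_mult_comm:
  assumes "A \<in> carrier_mat n n" "B \<in> carrier_mat n n"
  shows "mtrace (A * B) = mtrace (B * A)"
  unfolding mtrace_mult[OF assms] mtrace_mult[OF assms(2,1)]
  by (subst sum.swap) (simp add: mult.commute)

lemma mtrace_add: "A \<in> carrier_mat n n \<Longrightarrow> B \<in> carrier_mat n n \<Longrightarrow> mtrace (A + B) = mtrace A + mtrace B"
  unfolding mtrace_def by (simp add: sum.distrib)

lemma mtrace_minus: "A \<in> carrier_mat n n \<Longrightarrow> B \<in> carrier_mat n n \<Longrightarrow> mtrace (A - B) = mtrace A - mtrace B"
  unfolding mtrace_def by (simp add: sum_subtractf)

lemma mtrace_smult: "A \<in> carrier_mat n n \<Longrightarrow> mtrace (c \<cdot>\<^sub>m A) = c * mtrace A"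
  unfolding mtrace_def by (simp add: sum_distrib_left)

lemma mtrace_one_mat: "mtrace (1\<^sub>m n) = of_nat n"
  unfolding mtrace_def by simp

lemma mtrace_hermitian_real:
  assumes "A \<in> carrier_mat n n" "hermitian_mat A"
  shows "mtrace A = complex_of_real (Re (mtrace A))"
proof -
  have "Im (A $$ (i,i)) = 0" if "i < n" for i
  proof -
    have "A $$ (i,i) = cnj (A $$ (i,i))"
      using assms that unfolding hermitian_mat_iff[OF assms(1)] by blast
    then have "Im (A $$ (i,i)) = - Im (A $$ (i,i))" by (metis cnj.simps(2))
    then show ?thesis by simp
  qed
  then have "Im (mtrace A) = 0"
    using assms(1) unfolding mtrace_def by (simp add: Im_sum)
  then show ?thesis by (simp add: complex_eq_iff)
qed

lemma sum_lessThan_mult_nat: "(\<Sum>i<a*b. f i) = (\<Sum>p<a. \<Sum>q<b. f (p*b+q::nat))"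
proof (induction a)
  case (Suc a)
  have "(\<Sum>i<Suc a*b. f i) = (\<Sum>i<a*b. f i) + (\<Sum>i\<in>{a*b..<a*b+b}. f i)"
    by (simp add: add.commute lessThan_atLeast0 sum.atLeastLessThan_concat)
  also have "(\<Sum>i\<in>{a*b..<a*b+b}. f i) = (\<Sum>q<b. f (a*b+q))"
    by (rule sum.reindex_bij_witness[of _ "\<lambda>i. a*b+i" "\<lambda>i. i - a*b"]) auto
  finally show ?case using Suc by simp
qed simp

lemma mult_add_less_mult: "p < d \<Longrightarrow> a < m \<Longrightarrow> p*m+a < d*(m::nat)"
proof -
  assume "p < d" "a < m"
  then have "p*m+a < Suc p * m" by simp
  also have "\<dots> \<le> d*m" using \<open>p < d\<close> by (intro mult_right_mono) auto
  finally show ?thesis .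
qed

lemma div_mod_less_mult:
  assumes "i < d * (m::nat)"
  shows "i div m < d" "i mod m < m"
proof -
  have "0 < m" using assms by (cases m) auto
  then show "i mod m < m" by simp
  show "i div m < d" using assms by (simp add: less_mult_imp_div_less)
qed

lemma dim_kron [simp]:
  "dim_row (kron A B) = dim_row A * dim_row B" "dim_col (kron A B) = dim_col A * dim_col B"
  unfolding kron_def by auto

lemma index_kron:
  "i < dim_row A * dim_row B \<Longrightarrow> j < dim_col A * dim_col B \<Longrightarrow>
   kron A B $$ (i,j) = A $$ (i div dim_row B, j div dim_col B) * B $$ (i mod dim_row B, j mod dim_col B)"
  unfolding kron_def by auto

lemma kron_mult_kron:
  assumes A: "A \<in> carrier_mat n n" and C: "C \<in> carrier_mat n n"
    and B: "B \<in> carrier_mat m m" and E: "E \<in> carrier_mat m m"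
  shows "kron A B * kron C E = kron (A * C) (B * E)"
proof (rule eq_matI)
  fix i j assume "i < dim_row (kron (A * C) (B * E))" "j < dim_col (kron (A * C) (B * E))"
  then have i: "i < n*m" and j: "j < n*m" using A B C E by auto
  have "(kron A B * kron C E) $$ (i,j) = (\<Sum>k<n*m. kron A B $$ (i,k) * kron C E $$ (k,j))"
    using i j A B C E by (intro index_mult_mat_sum) auto
  also have "\<dots> = (\<Sum>p<n. \<Sum>q<m.
      (A $$ (i div m, p) * C $$ (p, j div m)) * (B $$ (i mod m, q) * E $$ (q, j mod m)))"
    unfolding sum_lessThan_mult_nat
    using i j A B C E mult_add_less_mult by (intro sum.cong refl) (simp add: index_kron)
  also have "\<dots> = (\<Sum>p<n. A $$ (i div m, p) * C $$ (p, j div m)) *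
      (\<Sum>q<m. B $$ (i mod m, q) * E $$ (q, j mod m))"
    by (simp add: sum_product)
  also have "\<dots> = (A * C) $$ (i div m, j div m) * (B * E) $$ (i mod m, j mod m)"
    using div_mod_less_mult[OF i] div_mod_less_mult[OF j]
    by (simp add: index_mult_mat_sum[OF A C] index_mult_mat_sum[OF B E])
  also have "\<dots> = kron (A * C) (B * E) $$ (i,j)"
    using i j A B C E by (simp add: index_kron)
  finally show "(kron A B * kron C E) $$ (i,j) = kron (A * C) (B * E) $$ (i,j)" .
qed (use A B C E in auto)

lemma mat_adjoint_kron:
  assumes A: "A \<in> carrier_mat n n" and B: "B \<in> carrier_mat m m"
  shows "mat_adjoint (kron A B) = kron (mat_adjoint A) (mat_adjoint B)"
proof (rule eq_matI)
  fix i j assume "i < dim_row (kron (mat_adjoint A) (mat_adjoint B))"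
    "j < dim_col (kron (mat_adjoint A) (mat_adjoint B))"
  then have i: "i < n*m" and j: "j < n*m" using A B by auto
  show "mat_adjoint (kron A B) $$ (i,j) = kron (mat_adjoint A) (mat_adjoint B) $$ (i,j)"
    using i j A B div_mod_less_mult[OF i] div_mod_less_mult[OF j] by (simp add: index_kron)
qed (use A B in auto)

lemma kron_one_mat: "kron (1\<^sub>m n) (1\<^sub>m m) = 1\<^sub>m (n * m)"
proof (rule eq_matI)
  fix i j assume "i < dim_row (1\<^sub>m (n * m))" "j < dim_col (1\<^sub>m (n * m))"
  then have i: "i < n*m" and j: "j < n*m" by auto
  have "(i div m = j div m \<and> i mod m = j mod m) = (i = j)"
    by (metis div_mult_mod_eq)
  then show "kron (1\<^sub>m n) (1\<^sub>m m) $$ (i,j) = 1\<^sub>m (n * m) $$ (i,j)"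
    using i j div_mod_less_mult[OF i] div_mod_less_mult[OF j] by (auto simp: index_kron)
qed auto

lemma mtrace_kron:
  assumes "A \<in> carrier_mat n n" "B \<in> carrier_mat m m"
  shows "mtrace (kron A B) = mtrace A * mtrace B"
proof -
  have "mtrace (kron A B) = (\<Sum>p<n. \<Sum>q<m. A $$ (p,p) * B $$ (q,q))"
    unfolding mtrace_def using assms mult_add_less_mult
    by (simp add: sum_lessThan_mult_nat index_kron)
  also have "\<dots> = mtrace A * mtrace B"
    unfolding mtrace_def using assms by (simp add: sum_product)
  finally show ?thesis .
qed

abbreviation kron_factors :: "nat list \<Rightarrow> complex mat list \<Rightarrow> bool" where
  "kron_factors dims As \<equiv> list_all2 (\<lambda>d A. A \<in> carrier_mat d d) dims As"

lemma kron_list_carrier: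
  "kron_factors dims As \<Longrightarrow> kron_list As \<in> carrier_mat (prod_list dims) (prod_list dims)"
  by (induction rule: list_all2_induct) auto

lemma kron_list_mult:
  "kron_factors dims As \<Longrightarrow> kron_factors dims Bs \<Longrightarrow>
   kron_list As * kron_list Bs = kron_list (map2 (*) As Bs)"
proof (induction dims arbitrary: As Bs)
  case (Cons d ds)
  then obtain A As' B Bs' where AB: "As = A # As'" "Bs = B # Bs'"
    and carriers: "A \<in> carrier_mat d d" "B \<in> carrier_mat d d" "kron_factors ds As'" "kron_factors ds Bs'"
    by (auto simp: list_all2_Cons1)
  show ?case
    unfolding AB using Cons.IH[OF carriers(3,4)]
    by (simp add: kron_mult_kron[OF carriers(1,2) kron_list_carrier[OF carriers(3)]
          kron_list_carrier[OF carriers(4)]])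
qed simp

lemma mat_adjoint_kron_list:
  "kron_factors dims As \<Longrightarrow> mat_adjoint (kron_list As) = kron_list (map mat_adjoint As)"
proof (induction rule: list_all2_induct)
  case Nil
  show ?case by (rule eq_matI) auto
next
  case (Cons d ds A As)
  then show ?case using mat_adjoint_kron[OF Cons(1) kron_list_carrier[OF Cons(2)]] by simp
qed

lemma kron_list_one_mat: "kron_list (map one_mat dims) = 1\<^sub>m (prod_list dims)"
  by (induction dims) (simp_all add: kron_one_mat)

lemma mtrace_kron_list:
  "kron_factors dims As \<Longrightarrow> mtrace (kron_list As) = prod_list (map mtrace As)"
  by (induction rule: list_all2_induct)
    (simp_all add: mtrace_one_mat mtrace_kron[OF _ kron_list_carrier])


section \<open>Product states and block-positive matrices\<close>

definition unit_norm_vec :: "nat \<Rightarrow> complex vec \<Rightarrow> bool" where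
  "unit_norm_vec d v \<longleftrightarrow> v \<in> carrier_vec d \<and> (\<Sum>i<d. (cmod (v $ i))\<^sup>2) = 1"

definition ket_bra :: "complex vec \<Rightarrow> complex mat" where
  "ket_bra v = mat (dim_vec v) (dim_vec v) (\<lambda>(i,j). v $ i * cnj (v $ j))"

definition vec_kron :: "complex vec \<Rightarrow> complex vec \<Rightarrow> complex vec" where
  "vec_kron x y = vec (dim_vec x * dim_vec y) (\<lambda>i. x $ (i div dim_vec y) * y $ (i mod dim_vec y))"

fun kron_vec_list :: "complex vec list \<Rightarrow> complex vec" where
  "kron_vec_list [] = vec 1 (\<lambda>_. 1)"
| "kron_vec_list (v # vs) = vec_kron v (kron_vec_list vs)"

definition quad_form :: "complex mat \<Rightarrow> complex vec \<Rightarrow> complex" where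
  "quad_form V x = (\<Sum>i<dim_vec x. \<Sum>j<dim_vec x. cnj (x $ i) * V $$ (i,j) * x $ j)"

lemma ket_bra_carrier: "v \<in> carrier_vec d \<Longrightarrow> ket_bra v \<in> carrier_mat d d"
  unfolding ket_bra_def by auto

lemma index_ket_bra: "i < dim_vec v \<Longrightarrow> j < dim_vec v \<Longrightarrow> ket_bra v $$ (i,j) = v $ i * cnj (v $ j)"
  unfolding ket_bra_def by auto

lemma kron_vec_list_carrier:
  "list_all2 unit_norm_vec dims vs \<Longrightarrow> kron_vec_list vs \<in> carrier_vec (prod_list dims)"
  by (induction rule: list_all2_induct) (auto simp: unit_norm_vec_def vec_kron_def)

lemma kron_ket_bra: "kron (ket_bra x) (ket_bra y) = ket_bra (vec_kron x y)"
proof (rule eq_matI)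
  fix i j assume "i < dim_row (ket_bra (vec_kron x y))" "j < dim_col (ket_bra (vec_kron x y))"
  then have i: "i < dim_vec x * dim_vec y" and j: "j < dim_vec x * dim_vec y"
    by (auto simp: ket_bra_def vec_kron_def)
  show "kron (ket_bra x) (ket_bra y) $$ (i,j) = ket_bra (vec_kron x y) $$ (i,j)"
    using i j div_mod_less_mult[OF i] div_mod_less_mult[OF j]
    by (simp add: index_kron ket_bra_def vec_kron_def)
qed (auto simp: ket_bra_def vec_kron_def)

lemma kron_list_ket_bra: "kron_list (map ket_bra vs) = ket_bra (kron_vec_list vs)"
proof (induction vs)
  case Nil
  show ?case by (rule eq_matI) (auto simp: ket_bra_def)
qed (simp add: kron_ket_bra)

lemma mtrace_mult_ket_bra:
  assumes "W \<in> carrier_mat n n" "x \<in> carrier_vec n"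
  shows "mtrace (W * ket_bra x) = quad_form W x"
  unfolding mtrace_mult[OF assms(1) ket_bra_carrier[OF assms(2)]] quad_form_def
  using assms by (auto simp: index_ket_bra ac_simps intro!: sum.cong)

lemma cscalar_prod_mult_mat_vec:
  assumes "V \<in> carrier_mat n n" "x \<in> carrier_vec n"
  shows "(V *\<^sub>v x) \<bullet>c x = quad_form V x"
proof -
  have "(V *\<^sub>v x) \<bullet>c x = (\<Sum>i<n. (\<Sum>j<n. V $$ (i,j) * x $ j) * cnj (x $ i))"
    using assms by (auto simp: scalar_prod_def lessThan_atLeast0 intro!: sum.cong)
  also have "\<dots> = quad_form V x" unfolding quad_form_def using assms
    by (auto intro!: sum.cong simp: sum_distrib_left ac_simps)
  finally show ?thesis .
qed

lemma density_op_ket_bra: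
  assumes "unit_norm_vec d v"
  shows "density_op d (ket_bra v)"
proof -
  have v: "v \<in> carrier_vec d" and norm: "(\<Sum>i<d. (cmod (v $ i))\<^sup>2) = 1"
    using assms unfolding unit_norm_vec_def by auto
  have c: "ket_bra v \<in> carrier_mat d d" using ket_bra_carrier[OF v] .
  have h: "hermitian_mat (ket_bra v)" unfolding hermitian_mat_iff[OF c] using v
    by (auto simp: index_ket_bra)
  have "0 \<le> Re ((ket_bra v *\<^sub>v w) \<bullet>c w)" if w: "w \<in> carrier_vec d" for w
  proof -
    let ?s = "\<Sum>j<d. cnj (v $ j) * w $ j"
    have "quad_form (ket_bra v) w = (\<Sum>i<d. \<Sum>j<d. cnj (w $ i) * (v $ i * cnj (v $ j)) * w $ j)"
      unfolding quad_form_def using v w by (auto simp: index_ket_bra intro!: sum.cong)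
    also have "\<dots> = cnj ?s * ?s"
      by (simp add: sum_product ac_simps)
    also have "\<dots> = complex_of_real ((cmod ?s)\<^sup>2)"
      using complex_norm_square[of ?s] by (simp only: mult.commute)
    finally show ?thesis using cscalar_prod_mult_mat_vec[OF c w] by simp
  qed
  moreover have "mtrace (ket_bra v) = 1"
  proof -
    have "mtrace (ket_bra v) = (\<Sum>i<d. v $ i * cnj (v $ i))"
      unfolding mtrace_def using c v by (simp add: index_ket_bra)
    also have "\<dots> = (\<Sum>i<d. complex_of_real ((cmod (v $ i))\<^sup>2))"
      by (rule sum.cong[OF refl], rule complex_norm_square[symmetric])
    finally show ?thesis using norm by (metis of_real_1 of_real_sum)
  qed
  ultimately show ?thesis unfolding density_op_def using c h by blast
qed

lemma density_op_carrier: "density_op d \<rho> \<Longrightarrow> \<rho> \<in> carrier_mat d d"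
  unfolding density_op_def by simp

lemma density_op_dim_pos: "density_op d \<rho> \<Longrightarrow> 0 < d"
  unfolding density_op_def mtrace_def by (cases d) auto

lemma density_ops_kron_factors: "list_all2 density_op dims \<sigma>s \<Longrightarrow> kron_factors dims \<sigma>s"
  by (auto elim: list_all2_mono simp: density_op_def)

lemma product_state_iff: "product_state dims \<tau> \<longleftrightarrow> (\<exists>\<sigma>s. list_all2 density_op dims \<sigma>s \<and> \<tau> = kron_list \<sigma>s)"
  unfolding product_state_def list_all2_conv_all_nth by (simp add: eq_commute[of "length dims"])

lemma product_state_carrier:
  "product_state dims \<tau> \<Longrightarrow> \<tau> \<in> carrier_mat (prod_list dims) (prod_list dims)"
  unfolding product_state_iff by (auto intro: kron_list_carrier density_ops_kron_factors)

lemma mtrace_product_state: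
  assumes "product_state dims \<tau>"
  shows "mtrace \<tau> = 1"
proof -
  obtain \<sigma>s where \<sigma>s: "list_all2 density_op dims \<sigma>s" and \<tau>: "\<tau> = kron_list \<sigma>s"
    using assms unfolding product_state_iff by blast
  have "prod_list (map mtrace \<sigma>s) = 1"
    using \<sigma>s by (induction rule: list_all2_induct) (auto simp: density_op_def)
  then show ?thesis unfolding \<tau> mtrace_kron_list[OF density_ops_kron_factors[OF \<sigma>s]] .
qed

lemma product_state_ket_bra:
  assumes "list_all2 unit_norm_vec dims vs"
  shows "product_state dims (ket_bra (kron_vec_list vs))"
proof -
  have "list_all2 density_op dims (map ket_bra vs)"
    using assms by (auto simp: list_all2_map2 density_op_ket_bra elim: list_all2_mono)
  then show ?thesis unfolding product_state_iff kron_list_ket_bra[symmetric] by blast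
qed

lemma separable_carrier: "separable dims \<sigma> \<Longrightarrow> \<sigma> \<in> carrier_mat (prod_list dims) (prod_list dims)"
  unfolding separable_def by simp

lemma product_state_separable: "product_state dims \<tau> \<Longrightarrow> separable dims \<tau>"
  unfolding separable_def
  by (intro conjI product_state_carrier exI[of _ 1] exI[of _ "\<lambda>_. 1"] exI[of _ "\<lambda>_. \<tau>"]) auto

lemma mtrace_separable:
  assumes "separable dims \<sigma>"
  shows "mtrace \<sigma> = 1"
proof -
  let ?D = "prod_list dims"
  obtain m :: nat and p \<tau> where p\<tau>: "\<forall>j<m. 0 \<le> p j \<and> product_state dims (\<tau> j)"
    and sum1: "(\<Sum>j<m. p j) = 1"
    and \<sigma>: "\<forall>a < ?D. \<forall>b < ?D. \<sigma> $$ (a,b) = (\<Sum>j<m. complex_of_real (p j) * \<tau> j $$ (a,b))"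
    using assms unfolding separable_def by blast
  have "mtrace \<sigma> = (\<Sum>a<?D. \<Sum>j<m. complex_of_real (p j) * \<tau> j $$ (a,a))"
    unfolding mtrace_def using separable_carrier[OF assms] \<sigma> by simp
  also have "\<dots> = (\<Sum>j<m. complex_of_real (p j) * mtrace (\<tau> j))"
  proof -
    have "dim_row (\<tau> j) = ?D" if "j < m" for j
      using p\<tau> that product_state_carrier by (metis carrier_matD(1))
    then show ?thesis
      unfolding mtrace_def by (subst sum.swap) (auto simp: sum_distrib_left intro!: sum.cong)
  qed
  also have "\<dots> = (\<Sum>j<m. complex_of_real (p j))"
    using p\<tau> mtrace_product_state by (intro sum.cong) auto
  also have "\<dots> = 1" using sum1 by (metis of_real_1 of_real_sum)
  finally show ?thesis .
qed

text \<open>For \<open>V\<close> acting on \<open>\<complex>\<^sup>d \<otimes> \<complex>\<^sup>m\<close>, \<open>compress d m V x\<close> is the operator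
  \<open>(x\<^sup>* \<otimes> I\<^sub>m) V (x \<otimes> I\<^sub>m)\<close> on \<open>\<complex>\<^sup>m\<close>.\<close>
definition compress :: "nat \<Rightarrow> nat \<Rightarrow> complex mat \<Rightarrow> complex vec \<Rightarrow> complex mat" where
  "compress d m V x = mat m m (\<lambda>(a,b). \<Sum>p<d. \<Sum>q<d. cnj (x$p) * x$q * V $$ (p*m+a, q*m+b))"

lemma index_compress:
  "a < m \<Longrightarrow> b < m \<Longrightarrow> compress d m V x $$ (a,b) = (\<Sum>p<d. \<Sum>q<d. cnj (x$p) * x$q * V $$ (p*m+a, q*m+b))"
  unfolding compress_def by simp

lemma compress_carrier: "compress d m V x \<in> carrier_mat m m"
  unfolding compress_def by simp

lemma mtrace_compress: "mtrace (compress d m V x) = (\<Sum>a<m. compress d m V x $$ (a,a))"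
  unfolding mtrace_def compress_def by simp

lemma quad_form_compress:
  assumes x: "x \<in> carrier_vec d" and y: "y \<in> carrier_vec m"
  shows "quad_form (compress d m V x) y = quad_form V (vec_kron x y)"
proof -
  let ?G = "\<lambda>p a q b. cnj (x$p * y$a) * V $$ (p*m+a, q*m+b) * (x$q * y$b)"
  have dim: "dim_vec (vec_kron x y) = d*m" using x y by (simp add: vec_kron_def)
  have entry: "vec_kron x y $ (p*m+a) = x$p * y$a" if "p < d" "a < m" for p a
    using x y that mult_add_less_mult[OF that] by (simp add: vec_kron_def)
  have "quad_form V (vec_kron x y) = (\<Sum>p<d. \<Sum>a<m. \<Sum>q<d. \<Sum>b<m. ?G p a q b)"
    unfolding quad_form_def dim sum_lessThan_mult_nat by (intro sum.cong refl) (simp add: entry)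
  also have "\<dots> = (\<Sum>a<m. \<Sum>p<d. \<Sum>q<d. \<Sum>b<m. ?G p a q b)" by (rule sum.swap)
  also have "\<dots> = (\<Sum>a<m. \<Sum>p<d. \<Sum>b<m. \<Sum>q<d. ?G p a q b)"
    by (rule sum.cong[OF refl], rule sum.cong[OF refl], rule sum.swap)
  also have "\<dots> = (\<Sum>a<m. \<Sum>b<m. \<Sum>p<d. \<Sum>q<d. ?G p a q b)"
    by (rule sum.cong[OF refl], rule sum.swap)
  also have "\<dots> = quad_form (compress d m V x) y"
    unfolding quad_form_def using y
    by (auto simp: index_compress sum_distrib_left sum_distrib_right ac_simps intro!: sum.cong)
  finally show ?thesis by simp
qed

lemma compress_hermitian:
  assumes "hermitian_mat V" "V \<in> carrier_mat (d*m) (d*m)"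
  shows "hermitian_mat (compress d m V x)"
  unfolding hermitian_mat_iff[OF compress_carrier]
proof (intro allI impI)
  fix a b assume ab: "a < m" "b < m"
  have "cnj (compress d m V x $$ (a,b)) = (\<Sum>p<d. \<Sum>q<d. x$p * cnj (x$q) * cnj (V $$ (p*m+a, q*m+b)))"
    using ab by (simp add: index_compress)
  also have "\<dots> = (\<Sum>p<d. \<Sum>q<d. x$p * cnj (x$q) * V $$ (q*m+b, p*m+a))"
  proof (intro sum.cong refl)
    fix p q assume "p \<in> {..<d}" "q \<in> {..<d}"
    then have "V $$ (q*m+b, p*m+a) = cnj (V $$ (p*m+a, q*m+b))"
      using assms ab mult_add_less_mult unfolding hermitian_mat_iff[OF assms(2)] by blast
    then show "x$p * cnj (x$q) * cnj (V $$ (p*m+a, q*m+b)) = x$p * cnj (x$q) * V $$ (q*m+b, p*m+a)"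
      by simp
  qed
  also have "\<dots> = (\<Sum>q<d. \<Sum>p<d. x$p * cnj (x$q) * V $$ (q*m+b, p*m+a))" by (rule sum.swap)
  also have "\<dots> = compress d m V x $$ (b,a)" using ab by (simp add: index_compress ac_simps)
  finally show "compress d m V x $$ (b,a) = cnj (compress d m V x $$ (a,b))" by simp
qed

lemma sum_delta_mult:
  fixes f :: "nat \<Rightarrow> complex"
  shows "p < d \<Longrightarrow> (\<Sum>i<d. (if i = p then 1 else 0) * f i) = f p"
proof -
  assume "p < d"
  have "(\<Sum>i<d. (if i = p then 1 else 0) * f i) = (\<Sum>i<d. if i = p then f i else 0)"
    by (intro sum.cong) auto
  then show ?thesis using \<open>p < d\<close> by simp
qed

lemma compress_unit_vec:
  assumes "p < d" "a < m" "b < m"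
  shows "compress d m V (unit_vec d p) $$ (a,b) = V $$ (p*m+a, p*m+b)"
proof -
  have "compress d m V (unit_vec d p) $$ (a,b) =
    (\<Sum>p'<d. (if p' = p then 1 else 0) * (\<Sum>q<d. (if q = p then 1 else 0) * V $$ (p'*m+a, q*m+b)))"
    using assms by (auto simp: index_compress sum_distrib_left intro!: sum.cong)
  then show ?thesis using assms(1) by (simp add: sum_delta_mult)
qed

lemma mtrace_eq_sum_compress:
  assumes "V \<in> carrier_mat (d*m) (d*m)"
  shows "mtrace V = (\<Sum>p<d. mtrace (compress d m V (unit_vec d p)))"
proof -
  have "mtrace V = (\<Sum>p<d. \<Sum>a<m. V $$ (p*m+a, p*m+a))"
    using assms unfolding mtrace_def by (simp add: sum_lessThan_mult_nat)
  also have "\<dots> = (\<Sum>p<d. mtrace (compress d m V (unit_vec d p)))"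
    unfolding mtrace_compress by (intro sum.cong refl) (simp add: compress_unit_vec)
  finally show ?thesis .
qed

lemma compress_two_point:
  assumes "p < d" "q < d" "p \<noteq> q" "a < m" "b < m"
    and x: "x = vec d (\<lambda>i. if i = p then complex_of_real c else if i = q then complex_of_real c * w else 0)"
  shows "compress d m V x $$ (a,b) = complex_of_real (c*c) * (V$$(p*m+a, p*m+b) + w * V$$(p*m+a, q*m+b)
     + cnj w * V$$(q*m+a, p*m+b) + cnj w * w * V$$(q*m+a, q*m+b))"
proof -
  have two_point: "(\<Sum>i<d. f i) = f p + f q" if "\<And>i. i < d \<Longrightarrow> i \<noteq> p \<Longrightarrow> i \<noteq> q \<Longrightarrow> f i = 0"
    for f :: "nat \<Rightarrow> complex"
  proof -
    have "(\<Sum>i<d. f i) = (\<Sum>i\<in>{p,q}. f i)"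
      using assms(1,2) that by (intro sum.mono_neutral_right) auto
    then show ?thesis using assms(3) by simp
  qed
  have "compress d m V x $$ (a,b) = (\<Sum>p'\<in>{p,q}. \<Sum>q'\<in>{p,q}. cnj (x$p') * x$q' * V $$ (p'*m+a, q'*m+b))"
    unfolding index_compress[OF assms(4,5)] using assms(1-3) x by (simp add: two_point)
  then show ?thesis using assms(1-3) x by (simp add: algebra_simps)
qed

lemma unit_norm_vec_unit_vec:
  assumes "p < d"
  shows "unit_norm_vec d (unit_vec d p)"
proof -
  have "(\<Sum>i<d. (cmod (unit_vec d p $ i))\<^sup>2) = (\<Sum>i<d. if i = p then 1 else 0)"
    by (intro sum.cong) (auto simp: unit_vec_def)
  then show ?thesis using assms unfolding unit_norm_vec_def by simp
qed

lemma unit_norm_vec_two_point: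
  assumes "p < d" "q < d" "p \<noteq> q" "cmod w = 1"
  shows "unit_norm_vec d (vec d (\<lambda>i. if i = p then complex_of_real (sqrt (1/2))
    else if i = q then complex_of_real (sqrt (1/2)) * w else 0))" (is "unit_norm_vec d ?x")
proof -
  have "(\<Sum>i<d. (cmod (?x $ i))\<^sup>2) = (\<Sum>i\<in>{p,q}. (cmod (?x $ i))\<^sup>2)"
    using assms(1,2) by (intro sum.mono_neutral_right) auto
  also have "\<dots> = 1" using assms by (simp add: norm_mult power_mult_distrib)
  finally show ?thesis unfolding unit_norm_vec_def by simp
qed

definition block_positive :: "nat list \<Rightarrow> complex mat \<Rightarrow> bool" where
  "block_positive dims V \<longleftrightarrow> V \<in> carrier_mat (prod_list dims) (prod_list dims) \<and> hermitian_mat V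
    \<and> (\<forall>vs. list_all2 unit_norm_vec dims vs \<longrightarrow> 0 \<le> Re (quad_form V (kron_vec_list vs)))"

lemma block_positive_compress:
  assumes V: "block_positive (d # ds) V" and x: "unit_norm_vec d x"
  shows "block_positive ds (compress d (prod_list ds) V x)"
  unfolding block_positive_def
proof (intro conjI allI impI compress_carrier)
  show "hermitian_mat (compress d (prod_list ds) V x)"
    using V by (intro compress_hermitian) (auto simp: block_positive_def)
  fix vs assume vs: "list_all2 unit_norm_vec ds vs"
  have "quad_form (compress d (prod_list ds) V x) (kron_vec_list vs) = quad_form V (kron_vec_list (x # vs))"
    using x kron_vec_list_carrier[OF vs] by (simp add: quad_form_compress unit_norm_vec_def)
  moreover have "list_all2 unit_norm_vec (d # ds) (x # vs)" using x vs by simp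
  then have "0 \<le> Re (quad_form V (kron_vec_list (x # vs)))"
    using V unfolding block_positive_def by blast
  ultimately show "0 \<le> Re (quad_form (compress d (prod_list ds) V x) (kron_vec_list vs))" by simp
qed

lemma norm_polarization_le:
  fixes x y z w :: complex
  shows "cmod (x - \<i> * y - z + \<i> * w) \<le> cmod x + cmod y + cmod z + cmod w"
proof -
  have "cmod (x - \<i> * y - z + \<i> * w) \<le> cmod (x - \<i> * y - z) + cmod (\<i> * w)"
    by (rule norm_triangle_ineq)
  also have "\<dots> \<le> cmod x + cmod (\<i> * y) + cmod z + cmod (\<i> * w)"
    using norm_triangle_ineq4[of "x - \<i> * y" z] norm_triangle_ineq4[of x "\<i> * y"] by simp
  finally show ?thesis by (simp add: norm_mult)
qed

lemma polarization_four_points: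
  fixes A B C F :: complex
  defines "E \<equiv> \<lambda>w. (A + w * B + cnj w * C + cnj w * w * F) / 2"
  shows "2 * B = E 1 - \<i> * E \<i> - E (-1) + \<i> * E (-\<i>)"
    and "Re (E 1) + Re (E \<i>) + Re (E (-1)) + Re (E (-\<i>)) = 2 * Re (A + F)"
  unfolding E_def by (simp_all add: complex_eq_iff field_simps)

text \<open>Testing with \<open>(e\<^sub>p + w e\<^sub>q)/\<surd>2\<close> for \<open>w \<in> {1, \<i>, -1, -\<i>}\<close> recovers the
  off-diagonal block of \<open>V\<close> by polarization, while the four traces add up to those of the two
  diagonal blocks.\<close>
lemma compress_offdiag_entry_bound:
  assumes pq: "p < d" "q < d" "p \<noteq> q" and ab: "a < m" "b < m"
    and bound: "\<And>x a b. unit_norm_vec d x \<Longrightarrow> a < m \<Longrightarrow> b < m \<Longrightarrow>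
      cmod (compress d m V x $$ (a,b)) \<le> Re (mtrace (compress d m V x))"
  shows "cmod (V $$ (p*m+a, q*m+b)) \<le>
    Re (mtrace (compress d m V (unit_vec d p))) + Re (mtrace (compress d m V (unit_vec d q)))"
proof -
  define c where "c = sqrt (1/2::real)"
  have cc: "complex_of_real (c * c) = 1/2" unfolding c_def by simp
  define X where "X w = compress d m V (vec d (\<lambda>i. if i = p then complex_of_real c
    else if i = q then complex_of_real c * w else 0))" for w
  have X_bound: "cmod (X w $$ (a,b)) \<le> Re (mtrace (X w))" if "cmod w = 1" for w
    unfolding X_def c_def using bound unit_norm_vec_two_point[OF pq that] ab by blast
  have X: "X w $$ (a',b') = (V$$(p*m+a', p*m+b') + w * V$$(p*m+a', q*m+b')
      + cnj w * V$$(q*m+a', p*m+b') + cnj w * w * V$$(q*m+a', q*m+b')) / 2"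
    if "a' < m" "b' < m" for w a' b'
    unfolding X_def compress_two_point[OF pq that refl] cc by simp
  let ?E = "\<lambda>w. X w $$ (a,b)"
  have "2 * V $$ (p*m+a, q*m+b) = ?E 1 - \<i> * ?E \<i> - ?E (-1) + \<i> * ?E (-\<i>)"
    unfolding X[OF ab] by (rule polarization_four_points(1))
  then have "2 * cmod (V $$ (p*m+a, q*m+b)) = cmod (?E 1 - \<i> * ?E \<i> - ?E (-1) + \<i> * ?E (-\<i>))"
    by (metis norm_mult norm_numeral)
  also have "\<dots> \<le> cmod (?E 1) + cmod (?E \<i>) + cmod (?E (-1)) + cmod (?E (-\<i>))"
    by (rule norm_polarization_le)
  also have "\<dots> \<le> Re (mtrace (X 1)) + Re (mtrace (X \<i>)) + Re (mtrace (X (-1))) + Re (mtrace (X (-\<i>)))"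
    by (intro add_mono X_bound) auto
  also have "\<dots> = (\<Sum>a'<m. Re (X 1 $$ (a',a')) + Re (X \<i> $$ (a',a')) + Re (X (-1) $$ (a',a'))
      + Re (X (-\<i>) $$ (a',a')))"
    unfolding X_def mtrace_compress by (simp add: Re_sum sum.distrib)
  also have "\<dots> = (\<Sum>a'<m. 2 * Re (V$$(p*m+a', p*m+a') + V$$(q*m+a', q*m+a')))"
    by (intro sum.cong refl, simp only: X lessThan_iff, rule polarization_four_points(2))
  also have "\<dots> = 2 * (Re (mtrace (compress d m V (unit_vec d p))) + Re (mtrace (compress d m V (unit_vec d q))))"
    using pq by (simp add: mtrace_compress compress_unit_vec Re_sum sum.distrib sum_distrib_left)
  finally show ?thesis by simp
qed

lemma block_positive_Cons_entry_bound:
  assumes V: "block_positive (d # ds) V" and a: "a < d * prod_list ds" and b: "b < d * prod_list ds"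
    and IH: "\<And>W a b. block_positive ds W \<Longrightarrow> a < prod_list ds \<Longrightarrow> b < prod_list ds \<Longrightarrow>
      cmod (W $$ (a,b)) \<le> Re (mtrace W)"
  shows "cmod (V $$ (a,b)) \<le> Re (mtrace V)"
proof -
  define m where "m = prod_list ds"
  have Vc: "V \<in> carrier_mat (d*m) (d*m)" using V unfolding block_positive_def m_def by simp
  have bound: "cmod (compress d m V x $$ (a',b')) \<le> Re (mtrace (compress d m V x))"
    if "unit_norm_vec d x" "a' < m" "b' < m" for x a' b'
    using IH[OF block_positive_compress[OF V that(1)]] that(2,3) unfolding m_def by blast
  let ?t = "\<lambda>p. Re (mtrace (compress d m V (unit_vec d p)))"
  have "0 < m" using a unfolding m_def by (cases "prod_list ds") auto
  have t_nonneg: "0 \<le> ?t p" if "p < d" for p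
    using order_trans[OF norm_ge_zero bound[OF unit_norm_vec_unit_vec[OF that] \<open>0 < m\<close> \<open>0 < m\<close>]] .
  have trace: "Re (mtrace V) = (\<Sum>p<d. ?t p)"
    unfolding mtrace_eq_sum_compress[OF Vc] by (simp add: Re_sum)
  define p q where "p = a div m" and "q = b div m"
  have pq: "p < d" "q < d" "a mod m < m" "b mod m < m"
    unfolding p_def q_def m_def using div_mod_less_mult[OF a] div_mod_less_mult[OF b] by auto
  have ab: "a = p*m + a mod m" "b = q*m + b mod m" unfolding p_def q_def by simp_all
  show ?thesis
  proof (cases "p = q")
    case True
    have "cmod (V $$ (a,b)) \<le> ?t p"
      using bound[OF unit_norm_vec_unit_vec[OF pq(1)] pq(3,4)] ab True pq
        by (simp add: compress_unit_vec)
    also have "\<dots> \<le> (\<Sum>p<d. ?t p)" using t_nonneg pq(1) by (intro member_le_sum) auto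
    finally show ?thesis using trace by simp
  next
    case False
    have "cmod (V $$ (a,b)) \<le> ?t p + ?t q"
      using compress_offdiag_entry_bound[OF pq(1,2) False pq(3,4) bound] ab by simp
    also have "\<dots> = (\<Sum>p\<in>{p,q}. ?t p)" using False by simp
    also have "\<dots> \<le> (\<Sum>p<d. ?t p)" using t_nonneg pq by (intro sum_mono2) auto
    finally show ?thesis using trace by simp
  qed
qed

lemma block_positive_entry_bound:
  "block_positive dims V \<Longrightarrow> a < prod_list dims \<Longrightarrow> b < prod_list dims \<Longrightarrow>
   cmod (V $$ (a,b)) \<le> Re (mtrace V)"
proof (induction dims arbitrary: V a b)
  case Nil
  then have V: "V \<in> carrier_mat 1 1" "hermitian_mat V" and "a = 0" "b = 0"
    and "0 \<le> Re (quad_form V (kron_vec_list []))" unfolding block_positive_def by auto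
  moreover have "quad_form V (kron_vec_list []) = mtrace V"
    using V unfolding quad_form_def mtrace_def by simp
  moreover have "mtrace V = V $$ (0,0)" using V unfolding mtrace_def by simp
  ultimately show ?case using mtrace_hermitian_real[OF V]
    by (metis norm_of_real abs_of_nonneg order_refl)
next
  case (Cons d ds)
  then show ?case using block_positive_Cons_entry_bound[of d ds V a b] by simp
qed

lemma density_op_block_positive:
  assumes "density_op d \<rho>"
  shows "block_positive [d] \<rho>"
proof -
  have "0 \<le> Re (quad_form \<rho> (kron_vec_list [v]))" if "unit_norm_vec d v" for v
  proof -
    have v: "v \<in> carrier_vec d" using that unfolding unit_norm_vec_def by simp
    have "kron_vec_list [v] = v" using v by (intro eq_vecI) (auto simp: vec_kron_def)
    moreover have "0 \<le> Re ((\<rho> *\<^sub>v v) \<bullet>c v)" using assms v unfolding density_op_def by blast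
    ultimately show ?thesis using cscalar_prod_mult_mat_vec[OF density_op_carrier[OF assms] v]
      by simp
  qed
  then show ?thesis
    using assms unfolding block_positive_def density_op_def by (auto simp: list_all2_Cons1)
qed

lemma density_op_entry_bound: "density_op d \<rho> \<Longrightarrow> a < d \<Longrightarrow> b < d \<Longrightarrow> cmod (\<rho> $$ (a,b)) \<le> 1"
  using block_positive_entry_bound[OF density_op_block_positive, of d \<rho> a b]
  unfolding density_op_def by simp

lemma entanglement_witness_block_positive:
  assumes "entanglement_witness dims W"
  shows "block_positive dims W"
proof -
  have W: "W \<in> carrier_mat (prod_list dims) (prod_list dims)"
    and sep: "\<And>\<sigma>. separable dims \<sigma> \<Longrightarrow> 0 \<le> Re (mtrace (W * \<sigma>))"
    using assms unfolding entanglement_witness_def by auto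
  have "0 \<le> Re (quad_form W (kron_vec_list vs))" if "list_all2 unit_norm_vec dims vs" for vs
    using sep[OF product_state_separable[OF product_state_ket_bra[OF that]]]
    by (simp add: mtrace_mult_ket_bra[OF W kron_vec_list_carrier[OF that]])
  then show ?thesis
    using assms unfolding block_positive_def entanglement_witness_def by blast
qed

lemma normalized_EW_entry_bound:
  "normalized_EW dims W \<Longrightarrow> a < prod_list dims \<Longrightarrow> b < prod_list dims \<Longrightarrow> cmod (W $$ (a,b)) \<le> 1"
  using block_positive_entry_bound[OF entanglement_witness_block_positive, of dims W a b]
  unfolding normalized_EW_def by simp

lemma kron_list_density_op_entry_bound:
  "list_all2 density_op dims \<sigma>s \<Longrightarrow> a < prod_list dims \<Longrightarrow> b < prod_list dims \<Longrightarrow>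
   cmod (kron_list \<sigma>s $$ (a,b)) \<le> 1"
proof (induction arbitrary: a b rule: list_all2_induct)
  case (Cons d ds \<sigma> \<sigma>s)
  let ?m = "prod_list ds"
  have a: "a < d * ?m" and b: "b < d * ?m" using Cons(4,5) by simp_all
  have "kron_list (\<sigma> # \<sigma>s) $$ (a,b) = \<sigma> $$ (a div ?m, b div ?m) * kron_list \<sigma>s $$ (a mod ?m, b mod ?m)"
    using a b density_op_carrier[OF Cons(1)] kron_list_carrier[OF density_ops_kron_factors[OF Cons(2)]]
    by (simp add: index_kron)
  then show ?case
    using density_op_entry_bound[OF Cons(1)] Cons.IH div_mod_less_mult[OF a] div_mod_less_mult[OF b]
    by (simp add: norm_mult mult_le_one)
qed simp

lemma product_state_entry_bound:
  "product_state dims \<tau> \<Longrightarrow> a < prod_list dims \<Longrightarrow> b < prod_list dims \<Longrightarrow> cmod (\<tau> $$ (a,b)) \<le> 1"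
  unfolding product_state_iff using kron_list_density_op_entry_bound by blast

lemma separable_entry_bound:
  assumes "separable dims \<sigma>" "a < prod_list dims" "b < prod_list dims"
  shows "cmod (\<sigma> $$ (a,b)) \<le> 1"
proof -
  obtain m :: nat and p \<tau> where p\<tau>: "\<forall>j<m. 0 \<le> p j \<and> product_state dims (\<tau> j)"
    and sum1: "(\<Sum>j<m. p j) = 1"
    and \<sigma>: "\<sigma> $$ (a,b) = (\<Sum>j<m. complex_of_real (p j) * \<tau> j $$ (a,b))"
    using assms unfolding separable_def by blast
  have "cmod (\<sigma> $$ (a,b)) \<le> (\<Sum>j<m. cmod (complex_of_real (p j) * \<tau> j $$ (a,b)))"
    unfolding \<sigma> by (rule norm_sum)
  also have "\<dots> \<le> (\<Sum>j<m. p j)"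
    using p\<tau> product_state_entry_bound[OF _ assms(2,3)]
    by (intro sum_mono) (simp add: norm_mult mult_left_le)
  finally show ?thesis using sum1 by simp
qed

lemma product_state_hermitian: "product_state dims \<tau> \<Longrightarrow> hermitian_mat \<tau>"
proof -
  assume "product_state dims \<tau>"
  then obtain \<sigma>s where \<sigma>s: "list_all2 density_op dims \<sigma>s" and \<tau>: "\<tau> = kron_list \<sigma>s"
    unfolding product_state_iff by blast
  have "map mat_adjoint \<sigma>s = \<sigma>s"
    using \<sigma>s by (induction rule: list_all2_induct) (auto simp: density_op_def hermitian_mat_def)
  then show "hermitian_mat \<tau>"
    unfolding hermitian_mat_def \<tau> mat_adjoint_kron_list[OF density_ops_kron_factors[OF \<sigma>s]] by simp
qed

lemma separable_hermitian:
  assumes "separable dims \<sigma>"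
  shows "hermitian_mat \<sigma>"
  unfolding hermitian_mat_iff[OF separable_carrier[OF assms]]
proof (intro allI impI)
  fix a b assume ab: "a < prod_list dims" "b < prod_list dims"
  obtain m :: nat and p \<tau> where p\<tau>: "\<forall>j<m. 0 \<le> p j \<and> product_state dims (\<tau> j)"
    and \<sigma>: "\<forall>a < prod_list dims. \<forall>b < prod_list dims. \<sigma> $$ (a,b) = (\<Sum>j<m. complex_of_real (p j) * \<tau> j $$ (a,b))"
    using assms unfolding separable_def by blast
  have "\<tau> j $$ (b,a) = cnj (\<tau> j $$ (a,b))" if "j < m" for j
    using p\<tau> that ab product_state_hermitian product_state_carrier hermitian_mat_iff by blast
  then show "\<sigma> $$ (b,a) = cnj (\<sigma> $$ (a,b))"
    using \<sigma> ab by simp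
qed

lemma separable_convex:
  assumes A: "separable dims A" and B: "separable dims B" and t: "0 \<le> t" "t \<le> 1"
  shows "separable dims (complex_of_real (1 - t) \<cdot>\<^sub>m A + complex_of_real t \<cdot>\<^sub>m B)"
proof -
  let ?D = "prod_list dims"
  obtain m1 :: nat and p1 \<tau>1 where p\<tau>1: "\<forall>j<m1. 0 \<le> p1 j \<and> product_state dims (\<tau>1 j)"
    and sum1: "(\<Sum>j<m1. p1 j) = 1"
    and A_eq: "\<forall>a < ?D. \<forall>b < ?D. A $$ (a,b) = (\<Sum>j<m1. complex_of_real (p1 j) * \<tau>1 j $$ (a,b))"
    using A unfolding separable_def by blast
  obtain m2 :: nat and p2 \<tau>2 where p\<tau>2: "\<forall>j<m2. 0 \<le> p2 j \<and> product_state dims (\<tau>2 j)"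
    and sum2: "(\<Sum>j<m2. p2 j) = 1"
    and B_eq: "\<forall>a < ?D. \<forall>b < ?D. B $$ (a,b) = (\<Sum>j<m2. complex_of_real (p2 j) * \<tau>2 j $$ (a,b))"
    using B unfolding separable_def by blast
  define p where "p j = (if j < m1 then (1 - t) * p1 j else t * p2 (j - m1))" for j
  define \<tau> where "\<tau> j = (if j < m1 then \<tau>1 j else \<tau>2 (j - m1))" for j
  have split: "(\<Sum>j<m1+m2. g j) = (\<Sum>j<m1. g j) + (\<Sum>j<m2. g (m1 + j))" for g :: "nat \<Rightarrow> 'a::comm_monoid_add"
    by (induction m2) (simp_all add: add.assoc)
  have terms: "\<forall>j<m1+m2. 0 \<le> p j \<and> product_state dims (\<tau> j)"
    using p\<tau>1 p\<tau>2 t unfolding p_def \<tau>_def by auto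
  have weights: "(\<Sum>j<m1+m2. p j) = 1"
    unfolding split p_def using sum1 sum2 by (simp add: sum_distrib_left[symmetric])
  have entries: "\<forall>a < ?D. \<forall>b < ?D. (complex_of_real (1 - t) \<cdot>\<^sub>m A + complex_of_real t \<cdot>\<^sub>m B) $$ (a,b)
      = (\<Sum>j<m1+m2. complex_of_real (p j) * \<tau> j $$ (a,b))"
    using A_eq B_eq separable_carrier[OF A] separable_carrier[OF B]
    unfolding split p_def \<tau>_def by (simp add: sum_distrib_left mult.assoc)
  have "complex_of_real (1 - t) \<cdot>\<^sub>m A + complex_of_real t \<cdot>\<^sub>m B \<in> carrier_mat ?D ?D"
    using separable_carrier[OF A] separable_carrier[OF B] by simp
  then show ?thesis
    unfolding separable_def
    by (intro conjI exI[of _ "m1+m2"] exI[of _ p] exI[of _ \<tau>] terms weights entries)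
qed

section \<open>Equivalence of norms on matrices\<close>

definition entry_norm1 :: "nat \<Rightarrow> complex mat \<Rightarrow> real" where
  "entry_norm1 n X = (\<Sum>a<n. \<Sum>b<n. cmod (X $$ (a,b)))"

lemma entry_norm1_nonneg: "0 \<le> entry_norm1 n X"
  unfolding entry_norm1_def by (intro sum_nonneg) auto

lemma entry_le_entry_norm1: "a < n \<Longrightarrow> b < n \<Longrightarrow> cmod (X $$ (a,b)) \<le> entry_norm1 n X"
  unfolding entry_norm1_def
  by (rule order_trans[OF member_le_sum[of b] member_le_sum[of a]]) (auto intro: sum_nonneg)

lemma entry_norm1_smult: "X \<in> carrier_mat n n \<Longrightarrow> entry_norm1 n (c \<cdot>\<^sub>m X) = cmod c * entry_norm1 n X"
  unfolding entry_norm1_def by (simp add: norm_mult sum_distrib_left)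

lemma entry_norm1_tendsto:
  "(\<And>a b. a < n \<Longrightarrow> b < n \<Longrightarrow> (\<lambda>k. X k $$ (a,b)) \<longlonglongrightarrow> L $$ (a,b)) \<Longrightarrow>
   (\<lambda>k. entry_norm1 n (X k)) \<longlonglongrightarrow> entry_norm1 n L"
  unfolding entry_norm1_def by (intro tendsto_sum tendsto_norm) auto

lemma finite_family_convergent_subseq:
  fixes f :: "nat \<Rightarrow> 'i \<Rightarrow> complex"
  assumes "finite S" "\<And>k i. i \<in> S \<Longrightarrow> cmod (f k i) \<le> B"
  shows "\<exists>r. strict_mono r \<and> (\<forall>i\<in>S. \<exists>l. (\<lambda>k. f (r k) i) \<longlonglongrightarrow> l)"
  using assms
proof (induction S rule: finite_induct)
  case empty
  show ?case using strict_mono_id by (auto simp: id_def)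
next
  case (insert x S)
  then obtain r where r: "strict_mono r" and conv: "\<forall>i\<in>S. \<exists>l. (\<lambda>k. f (r k) i) \<longlonglongrightarrow> l"
    by blast
  obtain g :: "nat \<Rightarrow> nat" and z where g: "strict_mono g"
    and gz: "\<forall>e>0. \<exists>N. \<forall>n\<ge>N. cmod (f (r (g n)) x - z) < e"
    using Bolzano_Weierstrass_complex_disc[of "\<lambda>n. f (r n) x" B] insert(4) by blast
  have "(\<lambda>n. f (r (g n)) x) \<longlonglongrightarrow> z" using gz by (intro LIMSEQ_I) auto
  moreover have "\<exists>l. (\<lambda>k. f (r (g k)) i) \<longlonglongrightarrow> l" if "i \<in> S" for i
    using conv that LIMSEQ_subseq_LIMSEQ[OF _ g] by (fastforce simp: o_def)
  ultimately show ?case using strict_mono_o[OF r g] by (auto simp: o_def)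
qed

lemma bounded_mat_seq_convergent_subseq:
  fixes X :: "nat \<Rightarrow> complex mat"
  assumes "\<And>k a b. a < n \<Longrightarrow> b < n \<Longrightarrow> cmod (X k $$ (a,b)) \<le> B"
  obtains r L where "strict_mono r" "L \<in> carrier_mat n n"
    "\<And>a b. a < n \<Longrightarrow> b < n \<Longrightarrow> (\<lambda>k. X (r k) $$ (a,b)) \<longlonglongrightarrow> L $$ (a,b)"
proof -
  obtain r where r: "strict_mono r"
    and conv: "\<forall>i\<in>{..<n}\<times>{..<n}. \<exists>l. (\<lambda>k. X (r k) $$ i) \<longlonglongrightarrow> l"
    using finite_family_convergent_subseq[of "{..<n}\<times>{..<n}" "\<lambda>k i. X k $$ i" B] assms by auto
  then obtain lim where "\<forall>i\<in>{..<n}\<times>{..<n}. (\<lambda>k. X (r k) $$ i) \<longlonglongrightarrow> lim i"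
    by metis
  then show thesis using that[OF r, of "mat n n lim"] by auto
qed

definition elem_mat :: "nat \<Rightarrow> nat \<Rightarrow> nat \<Rightarrow> complex mat" where
  "elem_mat n a b = mat n n (\<lambda>ij. if ij = (a,b) then 1 else 0)"

lemma mat_normD:
  assumes "mat_norm n N" "A \<in> carrier_mat n n"
  shows "0 \<le> N A" "N A = 0 \<longleftrightarrow> A = 0\<^sub>m n n" "N (c \<cdot>\<^sub>m A) = cmod c * N A"
  using assms unfolding mat_norm_def by auto

lemma mat_norm_triangle:
  "mat_norm n N \<Longrightarrow> A \<in> carrier_mat n n \<Longrightarrow> B \<in> carrier_mat n n \<Longrightarrow> N (A + B) \<le> N A + N B"
  unfolding mat_norm_def by blast

lemma mat_norm_restrict_le:
  assumes N: "mat_norm n N" and X: "X \<in> carrier_mat n n"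
    and T: "finite T" "T \<subseteq> {..<n}\<times>{..<n}"
  shows "N (mat n n (\<lambda>ij. if ij \<in> T then X $$ ij else 0))
    \<le> (\<Sum>(a,b)\<in>T. cmod (X $$ (a,b)) * N (elem_mat n a b))"
  using T
proof (induction T rule: finite_induct)
  case empty
  have "mat n n (\<lambda>ij. if ij \<in> {} then X $$ ij else 0) = 0\<^sub>m n n" by (rule eq_matI) auto
  then show ?case using mat_normD(2)[OF N zero_carrier_mat] by simp
next
  case (insert t T)
  obtain a b where t: "t = (a,b)" by (cases t)
  let ?M = "\<lambda>T. mat n n (\<lambda>ij. if ij \<in> T then X $$ ij else 0)"
  have E: "elem_mat n a b \<in> carrier_mat n n" by (simp add: elem_mat_def)
  have "?M (insert t T) = ?M T + X $$ (a,b) \<cdot>\<^sub>m elem_mat n a b"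
    using insert(2) by (intro eq_matI) (auto simp: elem_mat_def t)
  then have "N (?M (insert t T)) \<le> N (?M T) + cmod (X $$ (a,b)) * N (elem_mat n a b)"
    using mat_normD(3)[OF N E] mat_norm_triangle[OF N _ smult_carrier_mat[OF E]] by simp
  also have "N (?M T) \<le> (\<Sum>(a,b)\<in>T. cmod (X $$ (a,b)) * N (elem_mat n a b))"
    using insert by blast
  finally show ?case using insert(1,2) t by simp
qed

lemma mat_norm_le_entry_norm1:
  assumes N: "mat_norm n N"
  shows "\<exists>K\<ge>0. \<forall>X\<in>carrier_mat n n. N X \<le> K * entry_norm1 n X"
proof -
  define K where "K = (\<Sum>(a,b)\<in>{..<n}\<times>{..<n}. N (elem_mat n a b))"
  have N_nonneg: "0 \<le> N (elem_mat n a b)" for a b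
    using mat_normD(1)[OF N, of "elem_mat n a b"] by (simp add: elem_mat_def)
  have K: "N (elem_mat n a b) \<le> K" if "a < n" "b < n" for a b
    unfolding K_def using that N_nonneg
    by (intro member_le_sum[of "(a,b)" _ "\<lambda>(a,b). N (elem_mat n a b)", simplified]) auto
  have "N X \<le> K * entry_norm1 n X" if X: "X \<in> carrier_mat n n" for X
  proof -
    have "X = mat n n (\<lambda>ij. if ij \<in> {..<n}\<times>{..<n} then X $$ ij else 0)"
      using X by (intro eq_matI) auto
    then have "N X \<le> (\<Sum>(a,b)\<in>{..<n}\<times>{..<n}. cmod (X $$ (a,b)) * N (elem_mat n a b))"
      using mat_norm_restrict_le[OF N X, of "{..<n}\<times>{..<n}"] by simp
    also have "\<dots> \<le> (\<Sum>(a,b)\<in>{..<n}\<times>{..<n}. cmod (X $$ (a,b)) * K)"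
      using K by (intro sum_mono) (auto intro!: mult_left_mono)
    also have "\<dots> = K * entry_norm1 n X"
      unfolding entry_norm1_def sum.cartesian_product[symmetric]
      by (simp add: sum_distrib_left case_prod_unfold ac_simps)
    finally show ?thesis .
  qed
  moreover have "0 \<le> K" unfolding K_def using N_nonneg by (intro sum_nonneg) auto
  ultimately show ?thesis by blast
qed

lemma mat_norm_tendsto:
  assumes N: "mat_norm n N" and X: "\<And>k. X k \<in> carrier_mat n n" and L: "L \<in> carrier_mat n n"
    and lim: "\<And>a b. a < n \<Longrightarrow> b < n \<Longrightarrow> (\<lambda>k. X k $$ (a,b)) \<longlonglongrightarrow> L $$ (a,b)"
  shows "(\<lambda>k. N (X k)) \<longlonglongrightarrow> N L"
proof -
  obtain K where K: "\<forall>Y\<in>carrier_mat n n. N Y \<le> K * entry_norm1 n Y"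
    using mat_norm_le_entry_norm1[OF N] by blast
  have diff: "X k - L \<in> carrier_mat n n" for k using L by (rule minus_carrier_mat)
  have "(\<lambda>k. (X k - L) $$ (a,b)) \<longlonglongrightarrow> 0\<^sub>m n n $$ (a,b)" if "a < n" "b < n" for a b
    using tendsto_diff[OF lim[OF that] tendsto_const, of "L $$ (a,b)"] that L X by simp
  then have "(\<lambda>k. entry_norm1 n (X k - L)) \<longlonglongrightarrow> entry_norm1 n (0\<^sub>m n n)"
    by (rule entry_norm1_tendsto)
  then have l1_lim: "(\<lambda>k. entry_norm1 n (X k - L)) \<longlonglongrightarrow> 0" by (simp add: entry_norm1_def)
  have "\<forall>k. norm (N (X k) - N L) \<le> norm (entry_norm1 n (X k - L)) * K"
  proof
    fix k
    have eq1: "(X k - L) + L = X k" and eq2: "(-1) \<cdot>\<^sub>m (X k - L) + X k = L"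
      using L X[of k] by (auto intro!: eq_matI)
    have neg: "(-1) \<cdot>\<^sub>m (X k - L) \<in> carrier_mat n n" using diff[of k] by simp
    have "N (X k) \<le> N (X k - L) + N L"
      using mat_norm_triangle[OF N diff[of k] L] unfolding eq1 .
    moreover have "N L \<le> N (X k - L) + N (X k)"
      using mat_norm_triangle[OF N neg X[of k]] mat_normD(3)[OF N diff[of k], of "-1"]
      unfolding eq2 by simp
    ultimately have "\<bar>N (X k) - N L\<bar> \<le> N (X k - L)" by linarith
    also have "\<dots> \<le> K * entry_norm1 n (X k - L)" using K diff[of k] by blast
    finally show "norm (N (X k) - N L) \<le> norm (entry_norm1 n (X k - L)) * K"
      using entry_norm1_nonneg[of n "X k - L"] by (simp add: mult.commute)
  qed
  then have "(\<lambda>k. N (X k) - N L) \<longlonglongrightarrow> 0" by (rule tendsto_0_le[OF l1_lim always_eventually])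
  then show ?thesis by (rule LIM_zero_cancel)
qed

text \<open>By compactness of the unit sphere of \<open>entry_norm1\<close>, on which \<open>N\<close> is continuous.\<close>
lemma mat_norm_bounded_below_on_sphere:
  assumes N: "mat_norm n N"
  shows "\<exists>c>0. \<forall>X\<in>carrier_mat n n. entry_norm1 n X = 1 \<longrightarrow> c \<le> N X"
proof (rule ccontr)
  assume contra: "\<not> ?thesis"
  have "\<exists>X. X \<in> carrier_mat n n \<and> entry_norm1 n X = 1 \<and> N X < 1 / (real k + 1)" for k :: nat
  proof -
    have "(0::real) < 1 / (real k + 1)" by simp
    with contra show ?thesis by (force simp: not_le)
  qed
  then obtain X where X: "\<And>k. X k \<in> carrier_mat n n" "\<And>k. entry_norm1 n (X k) = 1"
    and NX: "\<And>k. N (X k) < 1 / (real k + 1)" by metis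
  obtain r L where r: "strict_mono r" and L: "L \<in> carrier_mat n n"
    and lim: "\<And>a b. a < n \<Longrightarrow> b < n \<Longrightarrow> (\<lambda>k. X (r k) $$ (a,b)) \<longlonglongrightarrow> L $$ (a,b)"
    using bounded_mat_seq_convergent_subseq[of n X 1] entry_le_entry_norm1 X(2) by metis
  have "entry_norm1 n L = 1" using LIMSEQ_unique[OF entry_norm1_tendsto[OF lim]] X(2) by simp
  have inv_lim: "(\<lambda>k. inverse (real (Suc (r k)))) \<longlonglongrightarrow> 0"
    using LIMSEQ_subseq_LIMSEQ[OF LIMSEQ_inverse_real_of_nat r] by (simp add: o_def)
  have "\<forall>k. norm (N (X (r k))) \<le> norm (inverse (real (Suc (r k)))) * 1"
  proof
    fix k
    show "norm (N (X (r k))) \<le> norm (inverse (real (Suc (r k)))) * 1"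
      using NX[of "r k"] mat_normD(1)[OF N X(1)] by (simp add: inverse_eq_divide add.commute)
  qed
  then have "(\<lambda>k. N (X (r k))) \<longlonglongrightarrow> 0" by (rule tendsto_0_le[OF inv_lim always_eventually])
  then have "N L = 0" using LIMSEQ_unique mat_norm_tendsto[OF N X(1) L lim] by blast
  then have "L = 0\<^sub>m n n" using mat_normD(2)[OF N L] by simp
  then show False using \<open>entry_norm1 n L = 1\<close> by (simp add: entry_norm1_def)
qed

lemma entry_norm1_le_mat_norm:
  assumes N: "mat_norm n N"
  shows "\<exists>C\<ge>0. \<forall>X\<in>carrier_mat n n. entry_norm1 n X \<le> C * N X"
proof -
  obtain c where c: "c > 0" "\<forall>X\<in>carrier_mat n n. entry_norm1 n X = 1 \<longrightarrow> c \<le> N X"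
    using mat_norm_bounded_below_on_sphere[OF N] by blast
  have "entry_norm1 n X \<le> (1/c) * N X" if X: "X \<in> carrier_mat n n" for X
  proof (cases "entry_norm1 n X = 0")
    case True
    then show ?thesis using mat_normD(1)[OF N X] c by simp
  next
    case False
    define s where "s = entry_norm1 n X"
    have s: "0 < s" using False entry_norm1_nonneg unfolding s_def by (metis less_eq_real_def)
    have "entry_norm1 n (complex_of_real (1/s) \<cdot>\<^sub>m X) = 1"
      using entry_norm1_smult[OF X] s unfolding s_def by (simp add: norm_divide)
    then have "c \<le> N (complex_of_real (1/s) \<cdot>\<^sub>m X)" using c X by simp
    also have "\<dots> = (1/s) * N X" using mat_normD(3)[OF N X] s by (simp add: norm_divide)
    finally show ?thesis using c s unfolding s_def by (simp add: field_simps)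
  qed
  then show ?thesis using c by (intro exI[of _ "1/c"]) auto
qed

section \<open>The infimum over normalized witnesses\<close>

definition witness_inf :: "nat list \<Rightarrow> complex mat \<Rightarrow> real" where
  "witness_inf dims \<rho> = (INF W \<in> {W. normalized_EW dims W}. Re (mtrace (W * \<rho>)))"

lemma witnessed_ent_eq: "witnessed_ent dims \<rho> = max 0 (- witness_inf dims \<rho>)"
  unfolding witnessed_ent_def witness_inf_def ..

lemma normalized_EW_carrier:
  "normalized_EW dims W \<Longrightarrow> W \<in> carrier_mat (prod_list dims) (prod_list dims)"
  unfolding normalized_EW_def entanglement_witness_def by simp

lemma cmod_mtrace_normalized_EW_le:
  assumes W: "normalized_EW dims W" and X: "X \<in> carrier_mat (prod_list dims) (prod_list dims)"
  shows "cmod (mtrace (W * X)) \<le> entry_norm1 (prod_list dims) X"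
proof -
  let ?D = "prod_list dims"
  have "cmod (mtrace (W * X)) \<le> (\<Sum>i<?D. \<Sum>j<?D. cmod (W $$ (i,j) * X $$ (j,i)))"
    unfolding mtrace_mult[OF normalized_EW_carrier[OF W] X]
    by (rule order_trans[OF norm_sum sum_mono[OF norm_sum]])
  also have "\<dots> \<le> (\<Sum>i<?D. \<Sum>j<?D. cmod (X $$ (j,i)))"
    using normalized_EW_entry_bound[OF W]
    by (intro sum_mono) (simp add: norm_mult mult_left_le_one_le)
  also have "\<dots> = entry_norm1 ?D X" unfolding entry_norm1_def by (rule sum.swap)
  finally show ?thesis .
qed

lemma separable_dim_pos: "separable dims \<sigma> \<Longrightarrow> 0 < prod_list dims"
  using mtrace_separable[of dims \<sigma>] separable_carrier[of dims \<sigma>] unfolding mtrace_def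
  by (cases "prod_list dims") auto

lemma normalized_EW_scaled_one:
  assumes "0 < prod_list dims"
  shows "normalized_EW dims (complex_of_real (1 / real (prod_list dims)) \<cdot>\<^sub>m 1\<^sub>m (prod_list dims))"
    (is "normalized_EW dims ?W")
proof -
  let ?D = "prod_list dims" and ?c = "complex_of_real (1 / real (prod_list dims))"
  have W: "?W \<in> carrier_mat ?D ?D" by simp
  have "mtrace (?W * \<sigma>) = ?c" if "separable dims \<sigma>" for \<sigma>
  proof -
    note \<sigma> = separable_carrier[OF that]
    have "?W * \<sigma> = ?c \<cdot>\<^sub>m \<sigma>"
      unfolding mult_smult_assoc_mat[OF one_carrier_mat \<sigma>] left_mult_one_mat[OF \<sigma>] ..
    then show ?thesis using mtrace_smult[OF \<sigma>] mtrace_separable[OF that] by simp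
  qed
  moreover have "mtrace ?W = 1"
    using assms by (simp add: mtrace_smult[OF one_carrier_mat] mtrace_one_mat)
      (metis less_irrefl prod_list_zero_iff)
  moreover have "hermitian_mat ?W"
    by (rule hermitian_mat_smult_real[OF one_carrier_mat hermitian_mat_one])
  ultimately show ?thesis unfolding normalized_EW_def entanglement_witness_def using W by simp
qed

lemma witness_values_bdd_below:
  assumes "X \<in> carrier_mat (prod_list dims) (prod_list dims)"
  shows "bdd_below ((\<lambda>W. Re (mtrace (W * X))) ` {W. normalized_EW dims W})"
proof (rule bdd_belowI)
  fix r assume "r \<in> (\<lambda>W. Re (mtrace (W * X))) ` {W. normalized_EW dims W}"
  then obtain W where W: "normalized_EW dims W" and r: "r = Re (mtrace (W * X))" by blast
  show "- entry_norm1 (prod_list dims) X \<le> r"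
    using cmod_mtrace_normalized_EW_le[OF W assms] abs_Re_le_cmod[of "mtrace (W * X)"] r by linarith
qed

lemma witness_inf_le:
  "normalized_EW dims W \<Longrightarrow> X \<in> carrier_mat (prod_list dims) (prod_list dims) \<Longrightarrow>
   witness_inf dims X \<le> Re (mtrace (W * X))"
  unfolding witness_inf_def by (rule cINF_lower[OF witness_values_bdd_below]) auto

lemma witness_inf_greatest:
  "0 < prod_list dims \<Longrightarrow> (\<And>W. normalized_EW dims W \<Longrightarrow> c \<le> Re (mtrace (W * X))) \<Longrightarrow>
   c \<le> witness_inf dims X"
  unfolding witness_inf_def using normalized_EW_scaled_one by (intro cINF_greatest) auto

lemma witnessed_ent_separable: "separable dims \<sigma> \<Longrightarrow> witnessed_ent dims \<sigma> = 0"
  unfolding witnessed_ent_eq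
  using witness_inf_greatest[OF separable_dim_pos, of dims \<sigma> 0 \<sigma>]
  by (auto simp: normalized_EW_def entanglement_witness_def)

lemma mtrace_mult_linear_combination:
  assumes W: "W \<in> carrier_mat n n" and A: "A \<in> carrier_mat n n" and B: "B \<in> carrier_mat n n"
  shows "mtrace (W * (a \<cdot>\<^sub>m A + b \<cdot>\<^sub>m B)) = a * mtrace (W * A) + b * mtrace (W * B)"
proof -
  have "W * (a \<cdot>\<^sub>m A + b \<cdot>\<^sub>m B) = a \<cdot>\<^sub>m (W * A) + b \<cdot>\<^sub>m (W * B)"
    unfolding mult_add_distrib_mat[OF W smult_carrier_mat[OF A] smult_carrier_mat[OF B]]
      mult_smult_distrib[OF W A] mult_smult_distrib[OF W B] ..
  then show ?thesis
    using A B W by (simp add: mtrace_add[of _ n] mtrace_smult[of _ n])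
qed

lemma mtrace_mult_minus:
  assumes W: "W \<in> carrier_mat n n" and A: "A \<in> carrier_mat n n" and B: "B \<in> carrier_mat n n"
  shows "mtrace (W * (A - B)) = mtrace (W * A) - mtrace (W * B)"
  unfolding mult_minus_distrib_mat[OF W A B] using A B W by (simp add: mtrace_minus[of _ n])

lemma mtrace_mult_minus_scalar_one:
  assumes W: "W \<in> carrier_mat n n" and X: "X \<in> carrier_mat n n"
  shows "mtrace ((W - c \<cdot>\<^sub>m 1\<^sub>m n) * X) = mtrace (W * X) - c * mtrace X"
proof -
  have "(W - c \<cdot>\<^sub>m 1\<^sub>m n) * X = W * X - c \<cdot>\<^sub>m X"
    unfolding minus_mult_distrib_mat[OF W smult_carrier_mat[OF one_carrier_mat] X]
      mult_smult_assoc_mat[OF one_carrier_mat X] left_mult_one_mat[OF X] ..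
  then show ?thesis using W X by (simp add: mtrace_minus[of _ n] mtrace_smult)
qed

lemma witness_inf_concave:
  assumes \<rho>: "\<rho> \<in> carrier_mat (prod_list dims) (prod_list dims)"
    and \<sigma>: "\<sigma> \<in> carrier_mat (prod_list dims) (prod_list dims)"
    and D: "0 < prod_list dims" and t: "0 \<le> t" "t \<le> 1"
  shows "t * witness_inf dims \<rho> + (1 - t) * witness_inf dims \<sigma>
    \<le> witness_inf dims (complex_of_real t \<cdot>\<^sub>m \<rho> + complex_of_real (1 - t) \<cdot>\<^sub>m \<sigma>)"
proof (rule witness_inf_greatest[OF D])
  fix W assume W: "normalized_EW dims W"
  note W_carrier = normalized_EW_carrier[OF W]
  have "Re (mtrace (W * (complex_of_real t \<cdot>\<^sub>m \<rho> + complex_of_real (1 - t) \<cdot>\<^sub>m \<sigma>)))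
      = t * Re (mtrace (W * \<rho>)) + (1 - t) * Re (mtrace (W * \<sigma>))"
    unfolding mtrace_mult_linear_combination[OF W_carrier \<rho> \<sigma>] by simp
  moreover have "t * witness_inf dims \<rho> \<le> t * Re (mtrace (W * \<rho>))"
    by (rule mult_left_mono[OF witness_inf_le[OF W \<rho>] t(1)])
  moreover have "(1 - t) * witness_inf dims \<sigma> \<le> (1 - t) * Re (mtrace (W * \<sigma>))"
    using witness_inf_le[OF W \<sigma>] t by (intro mult_left_mono) auto
  ultimately show "t * witness_inf dims \<rho> + (1 - t) * witness_inf dims \<sigma>
    \<le> Re (mtrace (W * (complex_of_real t \<cdot>\<^sub>m \<rho> + complex_of_real (1 - t) \<cdot>\<^sub>m \<sigma>)))" by simp
qed

lemma witnessed_ent_convex: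
  assumes "density_op (prod_list dims) \<rho>" "density_op (prod_list dims) \<sigma>" "0 \<le> t" "t \<le> 1"
  shows "witnessed_ent dims (complex_of_real t \<cdot>\<^sub>m \<rho> + complex_of_real (1 - t) \<cdot>\<^sub>m \<sigma>)
    \<le> t * witnessed_ent dims \<rho> + (1 - t) * witnessed_ent dims \<sigma>"
proof -
  have "t * witness_inf dims \<rho> + (1 - t) * witness_inf dims \<sigma>
    \<le> witness_inf dims (complex_of_real t \<cdot>\<^sub>m \<rho> + complex_of_real (1 - t) \<cdot>\<^sub>m \<sigma>)"
    using assms by (intro witness_inf_concave density_op_carrier density_op_dim_pos)
  moreover have "t * (- witness_inf dims \<rho>) \<le> t * max 0 (- witness_inf dims \<rho>)"
    and "(1 - t) * (- witness_inf dims \<sigma>) \<le> (1 - t) * max 0 (- witness_inf dims \<sigma>)"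
    using assms(3,4) by (intro mult_left_mono; simp)+
  moreover have "0 \<le> t * max 0 (- witness_inf dims \<rho>) + (1 - t) * max 0 (- witness_inf dims \<sigma>)"
    using assms(3,4) by simp
  ultimately show ?thesis unfolding witnessed_ent_eq
    by (intro max.boundedI) (simp_all add: algebra_simps)
qed

lemma abs_INF_diff_le:
  fixes f g :: "'a \<Rightarrow> real"
  assumes "A \<noteq> {}" "bdd_below (f ` A)" "bdd_below (g ` A)" "\<And>a. a \<in> A \<Longrightarrow> \<bar>f a - g a\<bar> \<le> e"
  shows "\<bar>(INF a\<in>A. f a) - (INF a\<in>A. g a)\<bar> \<le> e"
proof -
  have "(INF a\<in>A. f a) - e \<le> (INF a\<in>A. g a)"
    using assms cINF_lower[OF assms(2)] by (intro cINF_greatest) (fastforce simp: abs_le_iff)+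
  moreover have "(INF a\<in>A. g a) - e \<le> (INF a\<in>A. f a)"
    using assms cINF_lower[OF assms(3)] by (intro cINF_greatest) (fastforce simp: abs_le_iff)+
  ultimately show ?thesis by linarith
qed

lemma witnessed_ent_lipschitz:
  assumes \<rho>: "density_op (prod_list dims) \<rho>" and \<sigma>: "density_op (prod_list dims) \<sigma>"
  shows "\<bar>witnessed_ent dims \<rho> - witnessed_ent dims \<sigma>\<bar> \<le> entry_norm1 (prod_list dims) (\<rho> - \<sigma>)"
proof -
  let ?D = "prod_list dims"
  note carriers = density_op_carrier[OF \<rho>] density_op_carrier[OF \<sigma>]
  have "\<bar>witness_inf dims \<rho> - witness_inf dims \<sigma>\<bar> \<le> entry_norm1 ?D (\<rho> - \<sigma>)"
    unfolding witness_inf_def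
  proof (rule abs_INF_diff_le)
    show "{W. normalized_EW dims W} \<noteq> {}"
      using normalized_EW_scaled_one[OF density_op_dim_pos[OF \<rho>]] by blast
    show "bdd_below ((\<lambda>W. Re (mtrace (W * \<rho>))) ` {W. normalized_EW dims W})"
      by (rule witness_values_bdd_below[OF carriers(1)])
    show "bdd_below ((\<lambda>W. Re (mtrace (W * \<sigma>))) ` {W. normalized_EW dims W})"
      by (rule witness_values_bdd_below[OF carriers(2)])
    fix W assume "W \<in> {W. normalized_EW dims W}"
    then have W: "normalized_EW dims W" by simp
    have "\<bar>Re (mtrace (W * \<rho>)) - Re (mtrace (W * \<sigma>))\<bar> = \<bar>Re (mtrace (W * (\<rho> - \<sigma>)))\<bar>"
      unfolding mtrace_mult_minus[OF normalized_EW_carrier[OF W] carriers] by simp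
    also have "\<dots> \<le> entry_norm1 ?D (\<rho> - \<sigma>)"
      using abs_Re_le_cmod cmod_mtrace_normalized_EW_le[OF W minus_carrier_mat[OF carriers(2)]]
      by (rule order_trans)
    finally show "\<bar>Re (mtrace (W * \<rho>)) - Re (mtrace (W * \<sigma>))\<bar> \<le> entry_norm1 ?D (\<rho> - \<sigma>)" .
  qed
  then show ?thesis unfolding witnessed_ent_eq by linarith
qed

lemma witnessed_ent_continuous:
  assumes N: "mat_norm (prod_list dims) N"
  shows "\<exists>C::real. 0 \<le> C \<and> (\<forall>(\<epsilon>::real) \<rho> \<sigma>. 0 \<le> \<epsilon>
    \<and> density_op (prod_list dims) \<rho> \<and> density_op (prod_list dims) \<sigma> \<and> N (\<rho> - \<sigma>) \<le> \<epsilon> \<longrightarrow>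
    \<bar>witnessed_ent dims \<rho> - witnessed_ent dims \<sigma>\<bar> \<le> C * \<epsilon>)"
proof -
  obtain C where C: "C \<ge> 0"
    "\<forall>X\<in>carrier_mat (prod_list dims) (prod_list dims). entry_norm1 (prod_list dims) X \<le> C * N X"
    using entry_norm1_le_mat_norm[OF N] by blast
  have "\<bar>witnessed_ent dims \<rho> - witnessed_ent dims \<sigma>\<bar> \<le> C * \<epsilon>"
    if "density_op (prod_list dims) \<rho>" "density_op (prod_list dims) \<sigma>" "N (\<rho> - \<sigma>) \<le> \<epsilon>" for \<epsilon> \<rho> \<sigma>
  proof -
    have "\<rho> - \<sigma> \<in> carrier_mat (prod_list dims) (prod_list dims)"
      using density_op_carrier[OF that(2)] by (rule minus_carrier_mat)
    then have "entry_norm1 (prod_list dims) (\<rho> - \<sigma>) \<le> C * \<epsilon>"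
      using C that(3) by (meson mult_left_mono order_trans)
    then show ?thesis using witnessed_ent_lipschitz[OF that(1,2)] by linarith
  qed
  then show ?thesis using C(1) by blast
qed

section \<open>Invariance under local unitaries\<close>

lemma unitary_mat_adjoint: "unitary_mat d U \<Longrightarrow> unitary_mat d (mat_adjoint U)"
  unfolding unitary_mat_def using mat_adjoint_adjoint by (metis mat_adjoint_carrier)

lemma kron_factors_map2_mult:
  "kron_factors dims As \<Longrightarrow> kron_factors dims Bs \<Longrightarrow> kron_factors dims (map2 (*) As Bs)"
  by (auto simp: list_all2_conv_all_nth)

lemma kron_list_unitary:
  assumes "list_all2 unitary_mat dims Us"
  shows "unitary_mat (prod_list dims) (kron_list Us)"
proof -
  have factors: "kron_factors dims Us" "kron_factors dims (map mat_adjoint Us)"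
    using assms
      by (auto simp: list_all2_map2 unitary_mat_def mat_adjoint_carrier elim: list_all2_mono)
  have "map2 (*) Us (map mat_adjoint Us) = map one_mat dims"
    "map2 (*) (map mat_adjoint Us) Us = map one_mat dims"
    using assms by (induction rule: list_all2_induct) (auto simp: unitary_mat_def)
  then show ?thesis
    unfolding unitary_mat_def mat_adjoint_kron_list[OF factors(1)]
      kron_list_mult[OF factors(1,2)] kron_list_mult[OF factors(2,1)]
    using kron_list_carrier[OF factors(1)] by (simp add: kron_list_one_mat)
qed

lemma cscalar_prod_mat_adjoint:
  fixes U :: "complex mat"
  assumes U: "U \<in> carrier_mat n n" and w: "w \<in> carrier_vec n" and v: "v \<in> carrier_vec n"
  shows "(mat_adjoint U *\<^sub>v w) \<bullet>c v = w \<bullet>c (U *\<^sub>v v)"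
proof -
  have "(mat_adjoint U *\<^sub>v w) \<bullet>c v = (\<Sum>i<n. (\<Sum>j<n. cnj (U $$ (j,i)) * w $ j) * cnj (v $ i))"
    using U w v by (auto simp: scalar_prod_def lessThan_atLeast0 intro!: sum.cong)
  also have "\<dots> = (\<Sum>j<n. \<Sum>i<n. w $ j * (cnj (U $$ (j,i)) * cnj (v $ i)))"
    by (subst sum.swap) (simp add: sum_distrib_left sum_distrib_right ac_simps)
  also have "\<dots> = w \<bullet>c (U *\<^sub>v v)"
    using U w v by (auto simp: scalar_prod_def lessThan_atLeast0 sum_distrib_left intro!: sum.cong)
  finally show ?thesis .
qed

lemma density_op_unitary_conj:
  assumes U: "unitary_mat d U" and \<rho>: "density_op d \<rho>"
  shows "density_op d (mat_adjoint U * \<rho> * U)"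
proof -
  have Uc: "U \<in> carrier_mat d d" and Uadj: "mat_adjoint U \<in> carrier_mat d d"
    and UU: "U * mat_adjoint U = 1\<^sub>m d"
    using U unfolding unitary_mat_def by (auto simp: mat_adjoint_carrier)
  have \<rho>c: "\<rho> \<in> carrier_mat d d" and \<rho>h: "mat_adjoint \<rho> = \<rho>"
    and \<rho>pos: "\<forall>v \<in> carrier_vec d. 0 \<le> Re ((\<rho> *\<^sub>v v) \<bullet>c v)" and \<rho>tr: "mtrace \<rho> = 1"
    using \<rho> unfolding density_op_def hermitian_mat_def by auto
  have c: "mat_adjoint U * \<rho> * U \<in> carrier_mat d d" using Uadj \<rho>c Uc by simp
  have "mat_adjoint (mat_adjoint U * \<rho> * U) = mat_adjoint U * mat_adjoint (mat_adjoint U * \<rho>)"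
    by (rule mat_adjoint_mult[OF mult_carrier_mat[OF Uadj \<rho>c] Uc])
  also have "mat_adjoint (mat_adjoint U * \<rho>) = \<rho> * U"
    unfolding mat_adjoint_mult[OF Uadj \<rho>c] \<rho>h mat_adjoint_adjoint[OF Uc] ..
  finally have h: "hermitian_mat (mat_adjoint U * \<rho> * U)"
    unfolding hermitian_mat_def using Uadj \<rho>c Uc by simp
  have "0 \<le> Re (((mat_adjoint U * \<rho> * U) *\<^sub>v v) \<bullet>c v)" if v: "v \<in> carrier_vec d" for v
  proof -
    have "(mat_adjoint U * \<rho> * U) *\<^sub>v v = (mat_adjoint U * (\<rho> * U)) *\<^sub>v v"
      using Uadj \<rho>c Uc by simp
    also have "\<dots> = mat_adjoint U *\<^sub>v ((\<rho> * U) *\<^sub>v v)"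
      by (rule assoc_mult_mat_vec[OF Uadj mult_carrier_mat[OF \<rho>c Uc] v])
    also have "(\<rho> * U) *\<^sub>v v = \<rho> *\<^sub>v (U *\<^sub>v v)" by (rule assoc_mult_mat_vec[OF \<rho>c Uc v])
    finally have "(mat_adjoint U * \<rho> * U) *\<^sub>v v = mat_adjoint U *\<^sub>v (\<rho> *\<^sub>v (U *\<^sub>v v))" .
    then have "((mat_adjoint U * \<rho> * U) *\<^sub>v v) \<bullet>c v = (\<rho> *\<^sub>v (U *\<^sub>v v)) \<bullet>c (U *\<^sub>v v)"
      using cscalar_prod_mat_adjoint[OF Uc _ v, of "\<rho> *\<^sub>v (U *\<^sub>v v)"] \<rho>c Uc v by simp
    then show ?thesis using \<rho>pos Uc v by simp
  qed
  moreover have "mtrace (mat_adjoint U * \<rho> * U) = 1"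
  proof -
    have "mtrace (mat_adjoint U * \<rho> * U) = mtrace (U * (mat_adjoint U * \<rho>))"
      by (rule mtrace_mult_comm[OF mult_carrier_mat[OF Uadj \<rho>c] Uc])
    also have "U * (mat_adjoint U * \<rho>) = \<rho>"
      unfolding assoc_mult_mat[symmetric, OF Uc Uadj \<rho>c] UU using \<rho>c by simp
    finally show ?thesis using \<rho>tr by simp
  qed
  ultimately show ?thesis unfolding density_op_def using c h by blast
qed

lemma product_state_local_unitary_conj:
  assumes Us: "list_all2 unitary_mat dims Us" and \<tau>: "product_state dims \<tau>"
  shows "product_state dims (mat_adjoint (kron_list Us) * \<tau> * kron_list Us)"
proof -
  obtain \<sigma>s where \<sigma>s: "list_all2 density_op dims \<sigma>s" and \<tau>_eq: "\<tau> = kron_list \<sigma>s"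
    using \<tau> unfolding product_state_iff by blast
  have factors: "kron_factors dims Us" "kron_factors dims (map mat_adjoint Us)" "kron_factors dims \<sigma>s"
    using Us \<sigma>s by (auto simp: list_all2_map2 unitary_mat_def density_op_def mat_adjoint_carrier
        elim: list_all2_mono)
  let ?L = "map2 (*) (map2 (*) (map mat_adjoint Us) \<sigma>s) Us"
  have "mat_adjoint (kron_list Us) * \<tau> * kron_list Us = kron_list ?L"
    unfolding \<tau>_eq mat_adjoint_kron_list[OF factors(1)] kron_list_mult[OF factors(2,3)]
      kron_list_mult[OF kron_factors_map2_mult[OF factors(2,3)] factors(1)] ..
  moreover have "list_all2 density_op dims ?L"
    using Us \<sigma>s density_op_unitary_conj by (auto simp: list_all2_conv_all_nth)
  ultimately show ?thesis unfolding product_state_iff by blast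
qed

lemma index_mult_mult_mat:
  assumes "A \<in> carrier_mat n n" "X \<in> carrier_mat n n" "B \<in> carrier_mat n n" "a < n" "b < n"
  shows "(A * X * B) $$ (a,b) = (\<Sum>l<n. \<Sum>k<n. A $$ (a,l) * X $$ (l,k) * B $$ (k,b))"
proof -
  have "(A * X * B) $$ (a,b) = (\<Sum>k<n. (A * X) $$ (a,k) * B $$ (k,b))"
    using assms by (intro index_mult_mat_sum) auto
  also have "\<dots> = (\<Sum>k<n. \<Sum>l<n. A $$ (a,l) * X $$ (l,k) * B $$ (k,b))"
    using index_mult_mat_sum[OF assms(1,2,4)] by (simp add: sum_distrib_right)
  also have "\<dots> = (\<Sum>l<n. \<Sum>k<n. A $$ (a,l) * X $$ (l,k) * B $$ (k,b))" by (rule sum.swap)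
  finally show ?thesis .
qed

lemma separable_local_unitary_conj:
  assumes Us: "list_all2 unitary_mat dims Us" and \<tau>: "separable dims \<tau>"
  shows "separable dims (mat_adjoint (kron_list Us) * \<tau> * kron_list Us)"
proof -
  let ?D = "prod_list dims" and ?U = "kron_list Us"
  have U: "?U \<in> carrier_mat ?D ?D" and Uadj: "mat_adjoint ?U \<in> carrier_mat ?D ?D"
    using kron_list_unitary[OF Us] unfolding unitary_mat_def by (auto simp: mat_adjoint_carrier)
  note \<tau>c = separable_carrier[OF \<tau>]
  obtain m :: nat and p \<tau>s where p\<tau>s: "\<forall>j<m. 0 \<le> p j \<and> product_state dims (\<tau>s j)"
    and sum1: "(\<Sum>j<m. p j) = 1"
    and \<tau>_eq: "\<forall>a < ?D. \<forall>b < ?D. \<tau> $$ (a,b) = (\<Sum>j<m. complex_of_real (p j) * \<tau>s j $$ (a,b))"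
    using \<tau> unfolding separable_def by blast
  have entries: "(mat_adjoint ?U * \<tau> * ?U) $$ (a,b)
    = (\<Sum>j<m. complex_of_real (p j) * (mat_adjoint ?U * \<tau>s j * ?U) $$ (a,b))"
    if ab: "a < ?D" "b < ?D" for a b
  proof -
    have "(mat_adjoint ?U * \<tau> * ?U) $$ (a,b) = (\<Sum>l<?D. \<Sum>k<?D. \<Sum>j<m.
        complex_of_real (p j) * (mat_adjoint ?U $$ (a,l) * \<tau>s j $$ (l,k) * ?U $$ (k,b)))"
      unfolding index_mult_mult_mat[OF Uadj \<tau>c U ab] using \<tau>_eq
      by (intro sum.cong refl) (simp add: sum_distrib_left sum_distrib_right ac_simps)
    also have "\<dots> = (\<Sum>j<m. \<Sum>l<?D. \<Sum>k<?D.
        complex_of_real (p j) * (mat_adjoint ?U $$ (a,l) * \<tau>s j $$ (l,k) * ?U $$ (k,b)))"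
      by (subst sum.swap, subst (2) sum.swap) (rule refl)
    also have "\<dots> = (\<Sum>j<m. complex_of_real (p j) * (mat_adjoint ?U * \<tau>s j * ?U) $$ (a,b))"
      using p\<tau>s product_state_carrier
      by (intro sum.cong refl) (simp add: index_mult_mult_mat[OF Uadj _ U ab] sum_distrib_left)
    finally show ?thesis .
  qed
  have terms: "\<forall>j<m. 0 \<le> p j \<and> product_state dims (mat_adjoint ?U * \<tau>s j * ?U)"
    using p\<tau>s product_state_local_unitary_conj[OF Us] by blast
  have "mat_adjoint ?U * \<tau> * ?U \<in> carrier_mat ?D ?D" using Uadj \<tau>c U by simp
  then show ?thesis
    unfolding separable_def
    by (intro conjI exI[of _ m] exI[of _ p] exI[of _ "\<lambda>j. mat_adjoint ?U * \<tau>s j * ?U"]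
        terms sum1 allI impI entries)
qed

lemma mtrace_unitary_conj_mult:
  assumes U: "U \<in> carrier_mat n n" and W: "W \<in> carrier_mat n n"
    and V: "V \<in> carrier_mat n n" and X: "X \<in> carrier_mat n n"
  shows "mtrace (U * W * V * X) = mtrace (W * (V * X * U))"
proof -
  have "U * W * V * X = (U * W) * (V * X)" by (rule assoc_mult_mat[OF mult_carrier_mat[OF U W] V X])
  also have "\<dots> = U * (W * (V * X))" by (rule assoc_mult_mat[OF U W mult_carrier_mat[OF V X]])
  finally have "mtrace (U * W * V * X) = mtrace ((W * (V * X)) * U)"
    using U W V X by (simp add: mtrace_mult_comm[OF U])
  also have "(W * (V * X)) * U = W * (V * X * U)"
    by (rule assoc_mult_mat[OF W mult_carrier_mat[OF V X] U])
  finally show ?thesis .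
qed

lemma unitary_conj_inverse:
  assumes "unitary_mat n U" and X: "X \<in> carrier_mat n n"
  shows "U * (mat_adjoint U * X * U) * mat_adjoint U = X"
proof -
  have U: "U \<in> carrier_mat n n" and Ua: "mat_adjoint U \<in> carrier_mat n n"
    and UU: "U * mat_adjoint U = 1\<^sub>m n"
    using assms unfolding unitary_mat_def by (auto simp: mat_adjoint_carrier)
  have "U * (mat_adjoint U * X * U) = (U * (mat_adjoint U * X)) * U"
    by (rule assoc_mult_mat[symmetric, OF U mult_carrier_mat[OF Ua X] U])
  also have "U * (mat_adjoint U * X) = X"
    unfolding assoc_mult_mat[symmetric, OF U Ua X] UU using assms(2) by simp
  finally have "U * (mat_adjoint U * X * U) * mat_adjoint U = X * U * mat_adjoint U" by simp
  also have "\<dots> = X" unfolding assoc_mult_mat[OF assms(2) U Ua] UU using assms(2) by simp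
  finally show ?thesis .
qed

lemma normalized_EW_unitary_conj:
  assumes U: "unitary_mat (prod_list dims) U" and W: "normalized_EW dims W"
    and sep: "\<And>\<tau>. separable dims \<tau> \<Longrightarrow> separable dims (mat_adjoint U * \<tau> * U)"
  shows "normalized_EW dims (U * W * mat_adjoint U)"
proof -
  let ?D = "prod_list dims"
  have Uc: "U \<in> carrier_mat ?D ?D" and Uadj: "mat_adjoint U \<in> carrier_mat ?D ?D"
    and UU: "mat_adjoint U * U = 1\<^sub>m ?D"
    using U unfolding unitary_mat_def by (auto simp: mat_adjoint_carrier)
  have Wc: "W \<in> carrier_mat ?D ?D" and Wh: "mat_adjoint W = W" and Wtr: "mtrace W = 1"
    and Wsep: "\<And>\<sigma>. separable dims \<sigma> \<Longrightarrow> 0 \<le> Re (mtrace (W * \<sigma>))"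
    using W unfolding normalized_EW_def entanglement_witness_def hermitian_mat_def by auto
  have c: "U * W * mat_adjoint U \<in> carrier_mat ?D ?D" using Uc Wc Uadj by simp
  have "mat_adjoint (U * W * mat_adjoint U) = U * (W * mat_adjoint U)"
    unfolding mat_adjoint_mult[OF mult_carrier_mat[OF Uc Wc] Uadj] mat_adjoint_mult[OF Uc Wc]
      mat_adjoint_adjoint[OF Uc] Wh
    by (rule refl)
  also have "\<dots> = U * W * mat_adjoint U" by (rule assoc_mult_mat[symmetric, OF Uc Wc Uadj])
  finally have "hermitian_mat (U * W * mat_adjoint U)" unfolding hermitian_mat_def .
  moreover have "mtrace (U * W * mat_adjoint U) = 1"
  proof -
    have "mtrace (U * W * mat_adjoint U) = mtrace (mat_adjoint U * (U * W))"
      by (rule mtrace_mult_comm[OF mult_carrier_mat[OF Uc Wc] Uadj])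
    also have "mat_adjoint U * (U * W) = W"
      unfolding assoc_mult_mat[symmetric, OF Uadj Uc Wc] UU using Wc by simp
    finally show ?thesis using Wtr by simp
  qed
  moreover have "0 \<le> Re (mtrace (U * W * mat_adjoint U * \<tau>))" if "separable dims \<tau>" for \<tau>
    using Wsep[OF sep[OF that]] mtrace_unitary_conj_mult[OF Uc Wc Uadj separable_carrier[OF that]]
      by simp
  ultimately show ?thesis
    unfolding normalized_EW_def entanglement_witness_def using c by blast
qed

lemma witness_inf_le_unitary_conj:
  assumes U: "unitary_mat (prod_list dims) U" and X: "X \<in> carrier_mat (prod_list dims) (prod_list dims)"
    and D: "0 < prod_list dims"
    and sep: "\<And>\<tau>. separable dims \<tau> \<Longrightarrow> separable dims (mat_adjoint U * \<tau> * U)"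
  shows "witness_inf dims X \<le> witness_inf dims (mat_adjoint U * X * U)"
proof (rule witness_inf_greatest[OF D])
  fix W assume W: "normalized_EW dims W"
  have Uc: "U \<in> carrier_mat (prod_list dims) (prod_list dims)"
    using U unfolding unitary_mat_def by simp
  have "mtrace (W * (mat_adjoint U * X * U)) = mtrace (U * W * mat_adjoint U * X)"
    using mtrace_unitary_conj_mult[OF Uc normalized_EW_carrier[OF W] mat_adjoint_carrier[OF Uc] X]
      by simp
  then show "witness_inf dims X \<le> Re (mtrace (W * (mat_adjoint U * X * U)))"
    using witness_inf_le[OF normalized_EW_unitary_conj[OF U W sep] X] by simp
qed

lemma witnessed_ent_local_unitary_invariant:
  assumes Us: "list_all2 unitary_mat dims Us" and \<sigma>: "density_op (prod_list dims) \<sigma>"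
  shows "witnessed_ent dims \<sigma> = witnessed_ent dims (kron_list (map mat_adjoint Us) * \<sigma> * kron_list Us)"
proof -
  let ?D = "prod_list dims" and ?U = "kron_list Us"
  have U: "unitary_mat ?D ?U" by (rule kron_list_unitary[OF Us])
  have Uc: "?U \<in> carrier_mat ?D ?D" and UU: "?U * mat_adjoint ?U = 1\<^sub>m ?D"
    and Uadj: "mat_adjoint ?U \<in> carrier_mat ?D ?D" and UU': "mat_adjoint ?U * ?U = 1\<^sub>m ?D"
    using U unfolding unitary_mat_def by (auto simp: mat_adjoint_carrier)
  have adj_eq: "kron_list (map mat_adjoint Us) = mat_adjoint ?U"
    using Us
      by (intro mat_adjoint_kron_list[symmetric]) (auto simp: unitary_mat_def elim: list_all2_mono)
  have Us': "list_all2 unitary_mat dims (map mat_adjoint Us)"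
    using Us by (auto simp: list_all2_map2 unitary_mat_adjoint elim: list_all2_mono)
  note \<sigma>c = density_op_carrier[OF \<sigma>] and D = density_op_dim_pos[OF \<sigma>]
  have "witness_inf dims \<sigma> \<le> witness_inf dims (mat_adjoint ?U * \<sigma> * ?U)"
    using separable_local_unitary_conj[OF Us] by (intro witness_inf_le_unitary_conj[OF U \<sigma>c D])
  moreover have "witness_inf dims (mat_adjoint ?U * \<sigma> * ?U)
      \<le> witness_inf dims (mat_adjoint (mat_adjoint ?U) * (mat_adjoint ?U * \<sigma> * ?U) * mat_adjoint ?U)"
    using separable_local_unitary_conj[OF Us'] unfolding adj_eq
    by (intro witness_inf_le_unitary_conj unitary_mat_adjoint[OF U] D) (use Uadj \<sigma>c Uc in auto)
  moreover have "mat_adjoint (mat_adjoint ?U) * (mat_adjoint ?U * \<sigma> * ?U) * mat_adjoint ?U = \<sigma>"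
    unfolding mat_adjoint_adjoint[OF Uc] by (rule unitary_conj_inverse[OF U \<sigma>c])
  ultimately show ?thesis unfolding witnessed_ent_eq adj_eq by simp
qed

section \<open>Compactness of the separable states\<close>

text \<open>The induction step of Gaussian elimination, with pivot \<open>f j0 i0\<close>.\<close>
lemma linear_dependence_lift:
  fixes f :: "'j \<Rightarrow> 'i \<Rightarrow> real"
  assumes J: "finite J" "j0 \<in> J" and pivot: "f j0 i0 \<noteq> 0"
    and c': "\<exists>j\<in>J - {j0}. c' j \<noteq> 0"
      "\<forall>i\<in>I. (\<Sum>j\<in>J - {j0}. c' j * (f j i - (f j i0 / f j0 i0) * f j0 i)) = 0"
  shows "\<exists>c. (\<exists>j\<in>J. c j \<noteq> 0) \<and> (\<forall>i\<in>insert i0 I. (\<Sum>j\<in>J. c j * f j i) = 0)"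
proof -
  define S0 where "S0 = (\<Sum>j\<in>J - {j0}. c' j * f j i0)"
  define c where "c j = (if j = j0 then - S0 / f j0 i0 else c' j)" for j
  have split: "(\<Sum>j\<in>J. c j * f j i) = c j0 * f j0 i + (\<Sum>j\<in>J - {j0}. c' j * f j i)" for i
  proof -
    have "(\<Sum>j\<in>J. c j * f j i) = c j0 * f j0 i + (\<Sum>j\<in>J - {j0}. c j * f j i)"
      using J by (rule sum.remove)
    also have "(\<Sum>j\<in>J - {j0}. c j * f j i) = (\<Sum>j\<in>J - {j0}. c' j * f j i)"
      unfolding c_def by (intro sum.cong) auto
    finally show ?thesis .
  qed
  have "(\<Sum>j\<in>J. c j * f j i) = 0" if "i \<in> I" for i
  proof -
    have "(\<Sum>j\<in>J - {j0}. c' j * f j i) = (\<Sum>j\<in>J - {j0}.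
        c' j * (f j i - (f j i0 / f j0 i0) * f j0 i) + (f j0 i / f j0 i0) * (c' j * f j i0))"
      by (intro sum.cong refl) (simp add: algebra_simps)
    also have "\<dots> = (f j0 i / f j0 i0) * S0"
      using c'(2) that unfolding S0_def by (simp add: sum.distrib sum_distrib_left)
    finally show ?thesis unfolding split using pivot by (simp add: c_def field_simps)
  qed
  moreover have "(\<Sum>j\<in>J. c j * f j i0) = 0"
    unfolding split S0_def[symmetric] using pivot by (simp add: c_def)
  moreover have "\<exists>j\<in>J. c j \<noteq> 0" using c'(1) unfolding c_def by auto
  ultimately show ?thesis by blast
qed

lemma exists_linear_dependence:
  fixes f :: "'j \<Rightarrow> 'i \<Rightarrow> real"
  assumes "finite I" "finite J" "card I < card J"
  shows "\<exists>c. (\<exists>j\<in>J. c j \<noteq> 0) \<and> (\<forall>i\<in>I. (\<Sum>j\<in>J. c j * f j i) = 0)"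
  using assms
proof (induction I arbitrary: J f rule: finite_induct)
  case empty
  then obtain j where "j \<in> J" by fastforce
  then show ?case by (intro exI[of _ "\<lambda>_. 1"]) auto
next
  case (insert i0 I)
  show ?case
  proof (cases "\<forall>j\<in>J. f j i0 = 0")
    case True
    obtain c where "\<exists>j\<in>J. c j \<noteq> 0" "\<forall>i\<in>I. (\<Sum>j\<in>J. c j * f j i) = 0"
      using insert.IH[OF insert(4), of f] insert(1,2,5) by auto
    then show ?thesis using True by auto
  next
    case False
    then obtain j0 where j0: "j0 \<in> J" "f j0 i0 \<noteq> 0" by blast
    have "card I < card (J - {j0})"
      using insert(1,2,5) j0(1) insert(4) by (simp add: card_Diff_singleton)
    then obtain c' where "\<exists>j\<in>J - {j0}. c' j \<noteq> 0"
      "\<forall>i\<in>I. (\<Sum>j\<in>J - {j0}. c' j * (f j i - (f j i0 / f j0 i0) * f j0 i)) = 0"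
      using insert.IH[of "J - {j0}" "\<lambda>j i. f j i - (f j i0 / f j0 i0) * f j0 i"] insert(4) by blast
    then show ?thesis by (rule linear_dependence_lift[where f = f, OF insert(4) j0])
  qed
qed

lemma convex_combination_drop_point:
  fixes x :: "'j \<Rightarrow> 'i \<Rightarrow> real"
  assumes I: "finite I" and J: "finite J" "card I + 1 < card J"
    and p: "\<forall>j\<in>J. 0 \<le> p j" "(\<Sum>j\<in>J. p j) = 1"
  shows "\<exists>j1\<in>J. \<exists>p'. (\<forall>j\<in>J - {j1}. 0 \<le> p' j) \<and> (\<Sum>j\<in>J - {j1}. p' j) = 1
    \<and> (\<forall>i\<in>I. (\<Sum>j\<in>J - {j1}. p' j * x j i) = (\<Sum>j\<in>J. p j * x j i))"
proof -
  obtain c where c: "\<exists>j\<in>J. c j \<noteq> 0" and c_sum: "(\<Sum>j\<in>J. c j) = 0"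
    and c_x: "\<forall>i\<in>I. (\<Sum>j\<in>J. c j * x j i) = 0"
    using exists_linear_dependence[of "insert None (Some ` I)" J
        "\<lambda>j io. case io of None \<Rightarrow> 1 | Some i \<Rightarrow> x j i"] I J
    by (auto simp: card_insert_if card_image)
  have "\<exists>j\<in>J. 0 < c j"
  proof (rule ccontr)
    assume "\<not> ?thesis"
    then have "\<forall>j\<in>J. - c j = 0"
      using sum_nonneg_eq_0_iff[OF J(1), of "\<lambda>j. - c j"] c_sum by (simp add: sum_negf not_less)
    then show False using c by simp
  qed
  define Jp where "Jp = {j\<in>J. 0 < c j}"
  have Jp: "finite Jp" "Jp \<noteq> {}" unfolding Jp_def using J(1) \<open>\<exists>j\<in>J. 0 < c j\<close> by auto
  define t where "t = Min ((\<lambda>j. p j / c j) ` Jp)"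
  have "t \<in> (\<lambda>j. p j / c j) ` Jp" unfolding t_def using Jp by (intro Min_in) auto
  then obtain j1 where j1: "j1 \<in> Jp" "t = p j1 / c j1" by blast
  have t_le: "t \<le> p j / c j" if "j \<in> Jp" for j unfolding t_def using Jp that by (intro Min_le) auto
  have t_nonneg: "0 \<le> t" using j1 p unfolding Jp_def by auto
  define p' where "p' j = p j - t * c j" for j
  have "0 \<le> p' j" if "j \<in> J" for j
  proof (cases "0 < c j")
    case True
    then show ?thesis using t_le[of j] that unfolding p'_def Jp_def by (simp add: pos_le_divide_eq)
  next
    case False
    then have "t * c j \<le> 0" using t_nonneg by (simp add: mult_nonneg_nonpos)
    then show ?thesis using p that unfolding p'_def by auto
  qed
  moreover have "p' j1 = 0" and "j1 \<in> J" using j1 unfolding p'_def Jp_def by auto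
  moreover have "(\<Sum>j\<in>J. p' j) = 1"
    unfolding p'_def using p c_sum by (simp add: sum_subtractf sum_distrib_left[symmetric])
  moreover have "(\<Sum>j\<in>J. p' j * x j i) = (\<Sum>j\<in>J. p j * x j i)" if "i \<in> I" for i
    using c_x that unfolding p'_def
      by (simp add: algebra_simps sum_subtractf sum_distrib_left[symmetric])
  moreover have "(\<Sum>j\<in>J. g j) = g j1 + (\<Sum>j\<in>J - {j1}. g j)" if "j1 \<in> J" for g :: "'j \<Rightarrow> real"
    using J(1) that by (rule sum.remove)
  ultimately show ?thesis by (intro bexI[of _ j1] exI[of _ p']) auto
qed

lemma caratheodory_finite:
  fixes x :: "'j \<Rightarrow> 'i \<Rightarrow> real"
  assumes "finite I" "finite J" "\<forall>j\<in>J. 0 \<le> p j" "(\<Sum>j\<in>J. p j) = 1"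
  shows "\<exists>J' p'. J' \<subseteq> J \<and> card J' \<le> card I + 1 \<and> (\<forall>j\<in>J'. 0 \<le> p' j) \<and> (\<Sum>j\<in>J'. p' j) = 1
     \<and> (\<forall>i\<in>I. (\<Sum>j\<in>J'. p' j * x j i) = (\<Sum>j\<in>J. p j * x j i))"
  using assms(2-4)
proof (induction "card J" arbitrary: J p rule: less_induct)
  case less
  show ?case
  proof (cases "card J \<le> card I + 1")
    case True
    then show ?thesis using less(3,4) by (intro exI[of _ J] exI[of _ p]) auto
  next
    case False
    then have "card I + 1 < card J" by simp
    from convex_combination_drop_point[OF assms(1) less(2) this less(3,4), where x = x]
    obtain j1 p' where j1: "j1 \<in> J" and p': "\<forall>j\<in>J - {j1}. 0 \<le> p' j" "(\<Sum>j\<in>J - {j1}. p' j) = 1"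
      and x: "\<forall>i\<in>I. (\<Sum>j\<in>J - {j1}. p' j * x j i) = (\<Sum>j\<in>J. p j * x j i)"
      by blast
    have "card (J - {j1}) < card J" using less(2) j1 by (rule card_Diff1_less)
    from less(1)[OF this _ p'] less(2) obtain J' p'' where "J' \<subseteq> J - {j1}" "card J' \<le> card I + 1"
      "\<forall>j\<in>J'. 0 \<le> p'' j" "(\<Sum>j\<in>J'. p'' j) = 1"
      "\<forall>i\<in>I. (\<Sum>j\<in>J'. p'' j * x j i) = (\<Sum>j\<in>J - {j1}. p' j * x j i)"
      by auto
    then show ?thesis using x by (intro exI[of _ J'] exI[of _ p'']) auto
  qed
qed

lemma sum_bij_betw_padded:
  fixes n M :: nat
  assumes "bij_betw h {..<n} J" "n \<le> M"
  shows "(\<Sum>j\<in>J. g j) = (\<Sum>j<M. if j < n then g (h j) else 0)"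
proof -
  have "(\<Sum>j\<in>J. g j) = (\<Sum>j<n. g (h j))" by (rule sum.reindex_bij_betw[OF assms(1), symmetric])
  moreover have "(\<Sum>j<M. if j < n then g (h j) else 0) = (\<Sum>j<n. g (h j))"
    using assms(2) by (intro sum.mono_neutral_cong_right) auto
  ultimately show ?thesis by simp
qed

text \<open>Caratheodory's theorem in the real coordinates of \<open>D \<times> D\<close> matrices bounds the number of
  product states needed by \<open>2 D\<^sup>2 + 1\<close>.\<close>
lemma separable_fixed_number_of_terms:
  assumes "separable dims \<sigma>"
  defines "D \<equiv> prod_list dims"
  shows "\<exists>p \<tau>. (\<forall>j<2*D*D+1. 0 \<le> p j \<and> product_state dims (\<tau> j)) \<and> (\<Sum>j<2*D*D+1. p j) = 1
    \<and> (\<forall>a<D. \<forall>b<D. \<sigma> $$ (a,b) = (\<Sum>j<2*D*D+1. complex_of_real (p j) * \<tau> j $$ (a,b)))"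
proof -
  obtain m :: nat and p \<tau> where p\<tau>: "\<forall>j<m. 0 \<le> p j \<and> product_state dims (\<tau> j)"
    and sum1: "(\<Sum>j<m. p j) = 1"
    and \<sigma>: "\<forall>a < D. \<forall>b < D. \<sigma> $$ (a,b) = (\<Sum>j<m. complex_of_real (p j) * \<tau> j $$ (a,b))"
    using assms unfolding separable_def D_def by blast
  define I where "I = {..<D} \<times> {..<D} \<times> (UNIV :: bool set)"
  define x where "x j = (\<lambda>(a,b,re). if re then Re (\<tau> j $$ (a,b)) else Im (\<tau> j $$ (a,b)))" for j
  have I: "finite I" unfolding I_def by simp
  have p_nonneg: "\<forall>j\<in>{..<m}. 0 \<le> p j" using p\<tau> by simp
  obtain J' p' where J': "J' \<subseteq> {..<m}" "card J' \<le> card I + 1" and p': "\<forall>j\<in>J'. 0 \<le> p' j"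
    "(\<Sum>j\<in>J'. p' j) = 1" and x: "\<forall>i\<in>I. (\<Sum>j\<in>J'. p' j * x j i) = (\<Sum>j\<in>{..<m}. p j * x j i)"
    using caratheodory_finite[OF I finite_lessThan p_nonneg sum1, where x = x] by (elim exE conjE)
  have "card I = 2*D*D" unfolding I_def by (simp add: card_cartesian_product)
  then have card: "card J' \<le> 2*D*D+1" using J'(2) by simp
  have "finite J'" using J'(1) finite_subset by blast
  then obtain h where h: "bij_betw h {..<card J'} J'"
    using ex_bij_betw_nat_finite by (fastforce simp: atLeast0LessThan)
  have "J' \<noteq> {}" using p'(2) by auto
  then have "0 < card J'" using \<open>finite J'\<close> by auto
  define h' where "h' j = (if j < card J' then h j else h 0)" for j
  have h'J': "h' j \<in> J'" for j
    using h \<open>0 < card J'\<close> unfolding h'_def bij_betw_def by auto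
  define q where "q j = (if j < card J' then p' (h' j) else 0)" for j
  have entries: "\<forall>a<D. \<forall>b<D. \<sigma> $$ (a,b) = (\<Sum>j<2*D*D+1. complex_of_real (q j) * \<tau> (h' j) $$ (a,b))"
  proof (intro allI impI)
    fix a b assume ab: "a < D" "b < D"
    have "Re (\<sigma> $$ (a,b)) = (\<Sum>j\<in>J'. p' j * Re (\<tau> j $$ (a,b)))"
      using x[rule_format, of "(a,b,True)"] ab \<sigma> unfolding I_def x_def by (simp add: Re_sum)
    moreover have "Im (\<sigma> $$ (a,b)) = (\<Sum>j\<in>J'. p' j * Im (\<tau> j $$ (a,b)))"
      using x[rule_format, of "(a,b,False)"] ab \<sigma> unfolding I_def x_def by (simp add: Im_sum)
    ultimately have "\<sigma> $$ (a,b) = (\<Sum>j\<in>J'. complex_of_real (p' j) * \<tau> j $$ (a,b))"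
      by (simp add: complex_eq_iff Re_sum Im_sum)
    also have "\<dots> = (\<Sum>j<2*D*D+1. complex_of_real (q j) * \<tau> (h' j) $$ (a,b))"
      unfolding sum_bij_betw_padded[OF h card] q_def h'_def by (intro sum.cong) auto
    finally show "\<sigma> $$ (a,b) = (\<Sum>j<2*D*D+1. complex_of_real (q j) * \<tau> (h' j) $$ (a,b))" .
  qed
  have terms: "\<forall>j<2*D*D+1. 0 \<le> q j \<and> product_state dims (\<tau> (h' j))"
    using h'J' p' J'(1) p\<tau> unfolding q_def by auto
  have "(\<Sum>j<2*D*D+1. q j) = (\<Sum>j\<in>J'. p' j)"
    unfolding sum_bij_betw_padded[OF h card] q_def h'_def by (intro sum.cong) auto
  then have weights: "(\<Sum>j<2*D*D+1. q j) = 1" using p'(2) by simp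
  show ?thesis
    using terms weights entries by (intro exI[of _ q] exI[of _ "\<lambda>j. \<tau> (h' j)"] conjI) assumption+
qed

lemma density_op_limit:
  assumes Z: "\<And>k. density_op d (Z k)" and L: "L \<in> carrier_mat d d"
    and lim: "\<And>a b. a < d \<Longrightarrow> b < d \<Longrightarrow> (\<lambda>k. Z k $$ (a,b)) \<longlonglongrightarrow> L $$ (a,b)"
  shows "density_op d L"
proof -
  have Zc: "Z k \<in> carrier_mat d d" for k using density_op_carrier[OF Z] .
  have "L $$ (j,i) = cnj (L $$ (i,j))" if ij: "i < d" "j < d" for i j
  proof -
    have "Z k $$ (j,i) = cnj (Z k $$ (i,j))" for k
      using Z[of k] ij unfolding density_op_def hermitian_mat_iff[OF Zc] by blast
    then have "(\<lambda>k. Z k $$ (j,i)) \<longlonglongrightarrow> cnj (L $$ (i,j))" using tendsto_cnj[OF lim[OF ij]] by simp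
    then show ?thesis using LIMSEQ_unique lim ij by blast
  qed
  then have "hermitian_mat L" unfolding hermitian_mat_iff[OF L] by blast
  moreover have "0 \<le> Re ((L *\<^sub>v v) \<bullet>c v)" if v: "v \<in> carrier_vec d" for v
  proof -
    have "(\<lambda>k. quad_form (Z k) v) \<longlonglongrightarrow> quad_form L v"
      unfolding quad_form_def using v lim by (auto intro!: tendsto_sum tendsto_mult tendsto_const)
    then have "(\<lambda>k. Re (quad_form (Z k) v)) \<longlonglongrightarrow> Re (quad_form L v)" by (rule tendsto_Re)
    moreover have "0 \<le> Re (quad_form (Z k) v)" for k
      using Z[of k] v cscalar_prod_mult_mat_vec[OF Zc v] unfolding density_op_def by metis
    ultimately have "0 \<le> Re (quad_form L v)" by (intro LIMSEQ_le_const) auto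
    then show ?thesis using cscalar_prod_mult_mat_vec[OF L v] by simp
  qed
  moreover have "mtrace L = 1"
  proof -
    have "(\<lambda>k. \<Sum>i<d. Z k $$ (i,i)) \<longlonglongrightarrow> (\<Sum>i<d. L $$ (i,i))"
      using lim by (intro tendsto_sum) auto
    moreover have "dim_row (Z k) = d" for k using Zc[of k] by simp
    ultimately have "(\<lambda>k. mtrace (Z k)) \<longlonglongrightarrow> mtrace L"
      unfolding mtrace_def using L by simp
    moreover have "mtrace (Z k) = 1" for k using Z[of k] unfolding density_op_def by simp
    ultimately have "(\<lambda>k. 1) \<longlonglongrightarrow> mtrace L" by simp
    then show ?thesis by (simp add: LIMSEQ_const_iff)
  qed
  ultimately show ?thesis unfolding density_op_def using L by blast
qed

lemma kron_list_limit:
  assumes "\<And>k. kron_factors dims (Z k)" "kron_factors dims Ls"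
    and "\<And>l a b. l < length dims \<Longrightarrow> a < dims ! l \<Longrightarrow> b < dims ! l \<Longrightarrow>
      (\<lambda>k. Z k ! l $$ (a,b)) \<longlonglongrightarrow> Ls ! l $$ (a,b)"
    and "a < prod_list dims" "b < prod_list dims"
  shows "(\<lambda>k. kron_list (Z k) $$ (a,b)) \<longlonglongrightarrow> kron_list Ls $$ (a,b)"
  using assms
proof (induction dims arbitrary: Z Ls a b)
  case Nil
  then have "Z k = []" "Ls = []" for k by auto
  then show ?case by simp
next
  case (Cons d ds)
  let ?m = "prod_list ds"
  obtain L0 Ls' where Ls: "Ls = L0 # Ls'" "L0 \<in> carrier_mat d d" "kron_factors ds Ls'"
    using Cons(3) by (auto simp: list_all2_Cons1)
  have Z: "Z k \<noteq> []" "hd (Z k) \<in> carrier_mat d d" "kron_factors ds (tl (Z k))"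
    "length (tl (Z k)) = length ds" for k
    using Cons(2)[of k] by (auto simp: list_all2_Cons1 list_all2_lengthD)
  have a: "a < d * ?m" and b: "b < d * ?m" using Cons(5,6) by simp_all
  note ab = div_mod_less_mult[OF a] div_mod_less_mult[OF b]
  have "(\<lambda>k. hd (Z k) $$ (a div ?m, b div ?m)) \<longlonglongrightarrow> L0 $$ (a div ?m, b div ?m)"
    using Cons(4)[of 0] ab Z(1) Ls(1) by (simp add: hd_conv_nth)
  moreover have "(\<lambda>k. kron_list (tl (Z k)) $$ (a mod ?m, b mod ?m)) \<longlonglongrightarrow> kron_list Ls' $$ (a mod ?m, b mod ?m)"
  proof (rule Cons.IH[OF Z(3) Ls(3) _ ab(2,4)])
    fix l a' b' assume "l < length ds" "a' < ds ! l" "b' < ds ! l"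
    then show "(\<lambda>k. tl (Z k) ! l $$ (a', b')) \<longlonglongrightarrow> Ls' ! l $$ (a', b')"
      using Cons(4)[of "Suc l" a' b'] Z(4) Ls(1) by (simp add: nth_tl)
  qed
  moreover have "kron_list (Z k) $$ (a,b) =
      hd (Z k) $$ (a div ?m, b div ?m) * kron_list (tl (Z k)) $$ (a mod ?m, b mod ?m)" for k
  proof -
    have "kron_list (Z k) = kron (hd (Z k)) (kron_list (tl (Z k)))"
      using Z(1)[of k] by (metis kron_list.simps(2) list.collapse)
    then show ?thesis using a b Z(2)[of k] kron_list_carrier[OF Z(3)[of k]]
      by (simp add: index_kron)
  qed
  moreover have "kron_list Ls $$ (a,b) = L0 $$ (a div ?m, b div ?m) * kron_list Ls' $$ (a mod ?m, b mod ?m)"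
    using a b Ls kron_list_carrier[OF Ls(3)] by (simp add: index_kron)
  ultimately show ?case by (simp add: tendsto_mult)
qed

lemma prod_list_ge_member:
  fixes xs :: "nat list"
  shows "x \<in> set xs \<Longrightarrow> 0 < prod_list xs \<Longrightarrow> x \<le> prod_list xs"
proof (induction xs)
  case (Cons y ys)
  then have "0 < y" "0 < prod_list ys" by auto
  show ?case
  proof (cases "x = y")
    case True
    then show ?thesis using \<open>0 < prod_list ys\<close> by simp
  next
    case False
    then have "x \<le> prod_list ys" using Cons by auto
    also have "\<dots> \<le> y * prod_list ys" using \<open>0 < y\<close> by simp
    finally show ?thesis by simp
  qed
qed simp

lemma separable_seq_representation:
  fixes X :: "nat \<Rightarrow> complex mat"
  assumes X: "\<And>k. separable dims (X k)"
  defines "D \<equiv> prod_list dims"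
  defines "M \<equiv> 2*D*D+1"
  obtains P R where "\<And>k j. j < M \<Longrightarrow> 0 \<le> P k j" "\<And>k j. j < M \<Longrightarrow> list_all2 density_op dims (R k j)"
    "\<And>k. (\<Sum>j<M. P k j) = 1"
    "\<And>k a b. a < D \<Longrightarrow> b < D \<Longrightarrow> X k $$ (a,b) = (\<Sum>j<M. complex_of_real (P k j) * kron_list (R k j) $$ (a,b))"
proof -
  have "\<forall>k. \<exists>PR. (\<forall>j<M. 0 \<le> fst PR j \<and> list_all2 density_op dims (snd PR j)) \<and> (\<Sum>j<M. fst PR j) = 1
    \<and> (\<forall>a<D. \<forall>b<D. X k $$ (a,b) = (\<Sum>j<M. complex_of_real (fst PR j) * kron_list (snd PR j) $$ (a,b)))"
  proof
    fix k
    obtain p \<tau> where p\<tau>: "\<forall>j<M. 0 \<le> p j \<and> product_state dims (\<tau> j)" and "(\<Sum>j<M. p j) = 1"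
      and X_eq: "\<forall>a<D. \<forall>b<D. X k $$ (a,b) = (\<Sum>j<M. complex_of_real (p j) * \<tau> j $$ (a,b))"
      using separable_fixed_number_of_terms[OF X[of k]] unfolding M_def D_def by blast
    moreover have "\<forall>j. \<exists>\<sigma>s. j < M \<longrightarrow> list_all2 density_op dims \<sigma>s \<and> \<tau> j = kron_list \<sigma>s"
      using p\<tau> unfolding product_state_iff by blast
    then obtain R where "\<forall>j<M. list_all2 density_op dims (R j) \<and> \<tau> j = kron_list (R j)"
      using choice[of "\<lambda>j \<sigma>s. j < M \<longrightarrow> list_all2 density_op dims \<sigma>s \<and> \<tau> j = kron_list \<sigma>s"] by blast
    ultimately show "\<exists>PR. (\<forall>j<M. 0 \<le> fst PR j \<and> list_all2 density_op dims (snd PR j))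
      \<and> (\<Sum>j<M. fst PR j) = 1
      \<and> (\<forall>a<D. \<forall>b<D. X k $$ (a,b) = (\<Sum>j<M. complex_of_real (fst PR j) * kron_list (snd PR j) $$ (a,b)))"
      by (intro exI[of _ "(p, R)"]) auto
  qed
  from choice[OF this] obtain PR
    where "\<forall>k. (\<forall>j<M. 0 \<le> fst (PR k) j \<and> list_all2 density_op dims (snd (PR k) j))
    \<and> (\<Sum>j<M. fst (PR k) j) = 1
    \<and> (\<forall>a<D. \<forall>b<D. X k $$ (a,b) = (\<Sum>j<M. complex_of_real (fst (PR k) j) * kron_list (snd (PR k) j) $$ (a,b)))"
    by blast
  then show thesis using that[of "\<lambda>k. fst (PR k)" "\<lambda>k. snd (PR k)"] by blast
qed

text \<open>The weight of term \<open>j\<close> is treated as a fictitious factor \<open>l = length dims\<close>, so that a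
  single subsequence makes the weights and all factor entries converge.\<close>
lemma representation_convergent_subseq:
  fixes P :: "nat \<Rightarrow> nat \<Rightarrow> real" and R :: "nat \<Rightarrow> nat \<Rightarrow> complex mat list"
  assumes P: "\<And>k j. j < M \<Longrightarrow> 0 \<le> P k j" "\<And>k. (\<Sum>j<M. P k j) = 1"
    and R: "\<And>k j. j < M \<Longrightarrow> list_all2 density_op dims (R k j)"
    and D: "0 < prod_list dims"
  obtains r p Ls where "strict_mono r" "\<And>j. j < M \<Longrightarrow> (\<lambda>k. P (r k) j) \<longlonglongrightarrow> p j"
    "\<And>j. j < M \<Longrightarrow> kron_factors dims (Ls j)"
    "\<And>j l a b. j < M \<Longrightarrow> l < length dims \<Longrightarrow> a < dims ! l \<Longrightarrow> b < dims ! l \<Longrightarrow>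
      (\<lambda>k. R (r k) j ! l $$ (a,b)) \<longlonglongrightarrow> Ls j ! l $$ (a,b)"
proof -
  define n where "n = length dims"
  define S where "S = {..<M} \<times> {..<Suc n} \<times> {..<prod_list dims} \<times> {..<prod_list dims}"
  define F where "F k = (\<lambda>(j,l,a,b). if l = n then complex_of_real (P k j)
     else if a < dims!l \<and> b < dims!l then R k j ! l $$ (a,b) else 0)" for k
  have dims_le: "dims ! l \<le> prod_list dims" if "l < n" for l
    using prod_list_ge_member[OF nth_mem D] that unfolding n_def by blast
  have "cmod (F k i) \<le> 1" if "i \<in> S" for k i
  proof -
    obtain j l a b where i: "i = (j,l,a,b)" "j < M" "l < Suc n" using \<open>i \<in> S\<close> by (auto simp: S_def)
    show ?thesis
    proof (cases "l = n")
      case True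
      have "P k j \<le> (\<Sum>j<M. P k j)" using i(2) P(1) by (intro member_le_sum) auto
      then show ?thesis using True i P(1)[OF i(2)] P(2) by (simp add: F_def)
    next
      case False
      then have "density_op (dims ! l) (R k j ! l)"
        using i R[OF i(2)] unfolding n_def by (simp add: list_all2_conv_all_nth)
      then show ?thesis using i False density_op_entry_bound by (auto simp: F_def)
    qed
  qed
  then obtain r where r: "strict_mono r" and "\<forall>i\<in>S. \<exists>l. (\<lambda>k. F (r k) i) \<longlonglongrightarrow> l"
    using finite_family_convergent_subseq[of S F 1] unfolding S_def by auto
  then obtain lim where lim: "\<And>i. i \<in> S \<Longrightarrow> (\<lambda>k. F (r k) i) \<longlonglongrightarrow> lim i" by metis
  define Ls where "Ls j = map (\<lambda>l. mat (dims!l) (dims!l) (\<lambda>(a,b). lim (j,l,a,b))) [0..<n]" for j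
  show thesis
  proof (rule that[OF r, of "\<lambda>j. Re (lim (j,n,0,0))" Ls])
    fix j assume "j < M"
    then have "(\<lambda>k. F (r k) (j,n,0,0)) \<longlonglongrightarrow> lim (j,n,0,0)" using D by (intro lim) (auto simp: S_def)
    then show "(\<lambda>k. P (r k) j) \<longlonglongrightarrow> Re (lim (j,n,0,0))" using tendsto_Re by (fastforce simp: F_def)
    show "kron_factors dims (Ls j)" by (auto simp: Ls_def list_all2_conv_all_nth n_def)
  next
    fix j l a b assume "j < M" "l < length dims" "a < dims ! l" "b < dims ! l"
    moreover have "(j,l,a,b) \<in> S" using calculation dims_le unfolding S_def n_def by fastforce
    ultimately show "(\<lambda>k. R (r k) j ! l $$ (a,b)) \<longlonglongrightarrow> Ls j ! l $$ (a,b)"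
      using lim[of "(j,l,a,b)"] by (simp add: F_def Ls_def n_def)
  qed
qed

lemma separable_limit:
  assumes X: "\<And>k. separable dims (X k)" and L: "L \<in> carrier_mat (prod_list dims) (prod_list dims)"
    and lim: "\<And>a b. a < prod_list dims \<Longrightarrow> b < prod_list dims \<Longrightarrow> (\<lambda>k. X k $$ (a,b)) \<longlonglongrightarrow> L $$ (a,b)"
  shows "separable dims L"
proof -
  define D where "D = prod_list dims"
  define M where "M = 2*D*D+1"
  obtain P R where P_nonneg: "\<And>k j. j < M \<Longrightarrow> 0 \<le> P k j"
    and R: "\<And>k j. j < M \<Longrightarrow> list_all2 density_op dims (R k j)"
    and P_sum: "\<And>k. (\<Sum>j<M. P k j) = 1"
    and X_eq: "\<And>k a b. a < D \<Longrightarrow> b < D \<Longrightarrow>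
      X k $$ (a,b) = (\<Sum>j<M. complex_of_real (P k j) * kron_list (R k j) $$ (a,b))"
    using separable_seq_representation[where X = X, OF X, folded D_def, folded M_def] by blast
  obtain r p Ls where r: "strict_mono r" and p: "\<And>j. j < M \<Longrightarrow> (\<lambda>k. P (r k) j) \<longlonglongrightarrow> p j"
    and Ls: "\<And>j. j < M \<Longrightarrow> kron_factors dims (Ls j)"
    and R_lim: "\<And>j l a b. j < M \<Longrightarrow> l < length dims \<Longrightarrow> a < dims ! l \<Longrightarrow> b < dims ! l \<Longrightarrow>
      (\<lambda>k. R (r k) j ! l $$ (a,b)) \<longlonglongrightarrow> Ls j ! l $$ (a,b)"
    using representation_convergent_subseq[where P = P and R = R and M = M,
        OF P_nonneg P_sum R separable_dim_pos[OF X]] by blast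
  have factors: "list_all2 density_op dims (Ls j)" if "j < M" for j
    using R[OF that] Ls[OF that] R_lim[OF that]
      density_op_limit[of "dims ! l" "\<lambda>k. R (r k) j ! l" "Ls j ! l" for l]
    by (auto simp: list_all2_conv_all_nth)
  have kron_lim: "(\<lambda>k. kron_list (R (r k) j) $$ (a,b)) \<longlonglongrightarrow> kron_list (Ls j) $$ (a,b)"
    if "j < M" "a < D" "b < D" for j a b
    using kron_list_limit[OF density_ops_kron_factors[OF R] Ls R_lim] that unfolding D_def by blast
  have entries: "\<forall>a<D. \<forall>b<D. L $$ (a,b) = (\<Sum>j<M. complex_of_real (p j) * kron_list (Ls j) $$ (a,b))"
  proof (intro allI impI LIMSEQ_unique)
    fix a b assume that: "a < D" "b < D"
    show "(\<lambda>k. X (r k) $$ (a,b)) \<longlonglongrightarrow> L $$ (a,b)"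
      using LIMSEQ_subseq_LIMSEQ[OF lim r] that unfolding D_def by (simp add: o_def)
    show "(\<lambda>k. X (r k) $$ (a,b)) \<longlonglongrightarrow> (\<Sum>j<M. complex_of_real (p j) * kron_list (Ls j) $$ (a,b))"
      unfolding X_eq[OF that] using p kron_lim that
        by (auto intro!: tendsto_sum tendsto_mult tendsto_of_real)
  qed
  have terms: "\<forall>j<M. 0 \<le> p j \<and> product_state dims (kron_list (Ls j))"
    using p P_nonneg factors unfolding product_state_iff by (blast intro: LIMSEQ_le_const)
  have "(\<lambda>k. \<Sum>j<M. P (r k) j) \<longlonglongrightarrow> (\<Sum>j<M. p j)" using p by (intro tendsto_sum) auto
  then have weights: "(\<Sum>j<M. p j) = 1" using P_sum by (simp add: LIMSEQ_const_iff)
  show ?thesis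
    using L terms weights entries unfolding separable_def D_def[symmetric]
    by (intro conjI exI[of _ M] exI[of _ p] exI[of _ "\<lambda>j. kron_list (Ls j)"]) assumption+
qed

section \<open>Witnesses separating entangled states\<close>

definition hs_dist2 :: "nat \<Rightarrow> complex mat \<Rightarrow> complex mat \<Rightarrow> real" where
  "hs_dist2 n A B = (\<Sum>a<n. \<Sum>b<n. (cmod (A $$ (a,b) - B $$ (a,b)))\<^sup>2)"

lemma Re_cnj_mult_self: "Re (cnj z * z) = (cmod z)\<^sup>2"
  by (metis Re_complex_of_real complex_norm_square mult.commute)

lemma hs_dist2_nonneg: "0 \<le> hs_dist2 n A B"
  unfolding hs_dist2_def by (intro sum_nonneg) auto

lemma hs_dist2_eq_0_iff:
  "A \<in> carrier_mat n n \<Longrightarrow> B \<in> carrier_mat n n \<Longrightarrow> hs_dist2 n A B = 0 \<longleftrightarrow> A = B"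
  unfolding hs_dist2_def by (auto simp: sum_nonneg_eq_0_iff sum_nonneg intro!: eq_matI)

lemma separable_exists: "0 < prod_list dims \<Longrightarrow> \<exists>\<tau>. separable dims \<tau>"
proof -
  assume "0 < prod_list dims"
  then have "0 < d" if "d \<in> set dims" for d using that by (metis gr0I prod_list_zero_iff)
  then have "list_all2 unit_norm_vec dims (map (\<lambda>d. unit_vec d 0) dims)"
    by (auto simp: list_all2_conv_all_nth intro: unit_norm_vec_unit_vec)
  then show ?thesis using product_state_separable[OF product_state_ket_bra] by blast
qed

lemma nearest_separable_exists:
  assumes D: "0 < prod_list dims"
  shows "\<exists>P. separable dims P \<and>
    (\<forall>\<tau>. separable dims \<tau> \<longrightarrow> hs_dist2 (prod_list dims) \<sigma> P \<le> hs_dist2 (prod_list dims) \<sigma> \<tau>)"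
proof -
  let ?D = "prod_list dims"
  let ?f = "\<lambda>\<tau>. hs_dist2 ?D \<sigma> \<tau>" and ?S = "{\<tau>. separable dims \<tau>}"
  define \<delta> where "\<delta> = Inf (?f ` ?S)"
  have bdd: "bdd_below (?f ` ?S)" using hs_dist2_nonneg by (intro bdd_belowI) auto
  have "?S \<noteq> {}" using separable_exists[OF D] by blast
  then have "\<exists>\<tau>. separable dims \<tau> \<and> ?f \<tau> < \<delta> + 1 / (real k + 1)" for k :: nat
    using cInf_less_iff[OF _ bdd, of "\<delta> + 1 / (real k + 1)"] unfolding \<delta>_def by auto
  then obtain T where T: "\<And>k. separable dims (T k)" and T_lt: "\<And>k. ?f (T k) < \<delta> + 1 / (real k + 1)"
    by metis
  obtain r P where r: "strict_mono r" and P: "P \<in> carrier_mat ?D ?D"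
    and lim: "\<And>a b. a < ?D \<Longrightarrow> b < ?D \<Longrightarrow> (\<lambda>k. T (r k) $$ (a,b)) \<longlonglongrightarrow> P $$ (a,b)"
    using bounded_mat_seq_convergent_subseq[of ?D T 1] separable_entry_bound[OF T] by metis
  have "separable dims P" using separable_limit[of dims "\<lambda>k. T (r k)", OF T P lim] .
  moreover have "?f P \<le> \<delta>"
  proof (rule LIMSEQ_le)
    show "(\<lambda>k. ?f (T (r k))) \<longlonglongrightarrow> ?f P"
      unfolding hs_dist2_def using lim
        by (intro tendsto_sum tendsto_power tendsto_norm tendsto_diff) auto
    have "(\<lambda>k. inverse (real (Suc (r k)))) \<longlonglongrightarrow> 0"
      using LIMSEQ_subseq_LIMSEQ[OF LIMSEQ_inverse_real_of_nat r] by (simp add: o_def)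
    then show "(\<lambda>k. \<delta> + 1 / (real (r k) + 1)) \<longlonglongrightarrow> \<delta>"
      using tendsto_add[OF tendsto_const, of _ 0 sequentially \<delta>]
        by (simp add: divide_inverse add.commute)
    show "\<exists>N. \<forall>k\<ge>N. ?f (T (r k)) \<le> \<delta> + 1 / (real (r k) + 1)" using T_lt less_imp_le by blast
  qed
  moreover have "\<delta> \<le> ?f \<tau>" if "separable dims \<tau>" for \<tau>
    unfolding \<delta>_def using bdd that by (intro cInf_lower) auto
  ultimately show ?thesis by force
qed

lemma nonpos_if_le_mult_small:
  fixes x y :: real
  assumes "\<And>t. 0 < t \<Longrightarrow> t \<le> 1 \<Longrightarrow> x \<le> t * y" "0 \<le> y"
  shows "x \<le> 0"
proof (rule ccontr)
  assume "\<not> x \<le> 0"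
  define t where "t = min 1 (x / (y + 1))"
  have t: "0 < t" "t \<le> 1" unfolding t_def using \<open>\<not> x \<le> 0\<close> assms(2) by auto
  have "t * y \<le> (x / (y + 1)) * y" unfolding t_def using assms(2) by (intro mult_right_mono) auto
  also have "\<dots> < x" using \<open>\<not> x \<le> 0\<close> assms(2) by (simp add: field_simps)
  finally show False using assms(1)[OF t] by simp
qed

text \<open>Variational inequality for the nearest point \<open>P\<close> of a convex set: the angle at \<open>P\<close>
  between \<open>\<sigma>\<close> and \<open>\<tau>\<close> is obtuse.\<close>
lemma nearest_separable_obtuse:
  assumes P: "separable dims P" and \<tau>: "separable dims \<tau>"
    and nearest: "\<And>\<tau>. separable dims \<tau> \<Longrightarrow> hs_dist2 (prod_list dims) \<sigma> P \<le> hs_dist2 (prod_list dims) \<sigma> \<tau>"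
  shows "(\<Sum>a<prod_list dims. \<Sum>b<prod_list dims.
    Re (cnj (\<sigma> $$ (a,b) - P $$ (a,b)) * (\<tau> $$ (a,b) - P $$ (a,b)))) \<le> 0" (is "?ip \<le> 0")
proof (rule nonpos_if_le_mult_small)
  let ?D = "prod_list dims"
  let ?nY = "\<Sum>a<?D. \<Sum>b<?D. (cmod (\<tau> $$ (a,b) - P $$ (a,b)))\<^sup>2"
  show nY: "0 \<le> ?nY" by (intro sum_nonneg) auto
  fix t :: real assume t: "0 < t" "t \<le> 1"
  let ?Q = "complex_of_real (1 - t) \<cdot>\<^sub>m P + complex_of_real t \<cdot>\<^sub>m \<tau>"
  have "hs_dist2 ?D \<sigma> ?Q = (\<Sum>a<?D. \<Sum>b<?D.
      (cmod ((\<sigma> $$ (a,b) - P $$ (a,b)) - complex_of_real t * (\<tau> $$ (a,b) - P $$ (a,b))))\<^sup>2)"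
    unfolding hs_dist2_def using separable_carrier[OF P] separable_carrier[OF \<tau>]
    by (intro sum.cong refl) (simp add: algebra_simps)
  also have "\<dots> = hs_dist2 ?D \<sigma> P - 2 * t * ?ip + t\<^sup>2 * ?nY"
    unfolding hs_dist2_def cmod_power2
    by (simp add: power2_eq_square algebra_simps sum.distrib sum_subtractf sum_distrib_left)
  finally have "hs_dist2 ?D \<sigma> ?Q = hs_dist2 ?D \<sigma> P - 2 * t * ?ip + t\<^sup>2 * ?nY" .
  moreover have "hs_dist2 ?D \<sigma> P \<le> hs_dist2 ?D \<sigma> ?Q"
    using t by (intro nearest separable_convex[OF P \<tau>]) auto
  ultimately have "t * (2 * ?ip) \<le> t * (t * ?nY)" by (simp add: power2_eq_square algebra_simps)
  then have "2 * ?ip \<le> t * ?nY" using t by simp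
  then show "?ip \<le> t * ?nY" using mult_nonneg_nonneg[OF less_imp_le[OF t(1)] nY] by linarith
qed

lemma mtrace_mult_hermitian:
  assumes W: "W \<in> carrier_mat n n" "hermitian_mat W" and X: "X \<in> carrier_mat n n"
  shows "mtrace (W * X) = (\<Sum>a<n. \<Sum>b<n. cnj (W $$ (a,b)) * X $$ (a,b))"
proof -
  have "mtrace (W * X) = (\<Sum>i<n. \<Sum>j<n. cnj (W $$ (j,i)) * X $$ (j,i))"
    unfolding mtrace_mult[OF W(1) X]
  proof (intro sum.cong refl)
    fix i j assume "i \<in> {..<n}" "j \<in> {..<n}"
    then have "i < n" "j < n" by auto
    then have "W $$ (i,j) = cnj (W $$ (j,i))" using W(2) unfolding hermitian_mat_iff[OF W(1)]
      by blast
    then show "W $$ (i,j) * X $$ (j,i) = cnj (W $$ (j,i)) * X $$ (j,i)" by simp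
  qed
  also have "\<dots> = (\<Sum>a<n. \<Sum>b<n. cnj (W $$ (a,b)) * X $$ (a,b))" by (rule sum.swap)
  finally show ?thesis .
qed

text \<open>If \<open>P\<close> is the separable state nearest to \<open>\<sigma>\<close>, the hyperplane through \<open>P\<close>
  orthogonal to \<open>\<sigma> - P\<close> separates \<open>\<sigma>\<close> from all separable states; as an operator this is
  \<open>W = (P - \<sigma>) - c I\<close> with \<open>c = Re \<langle>P - \<sigma>, P\<rangle>\<close>.\<close>
lemma separating_witness_exists:
  assumes \<sigma>: "density_op (prod_list dims) \<sigma>" and entangled: "\<not> separable dims \<sigma>"
  shows "\<exists>W. entanglement_witness dims W \<and> Re (mtrace (W * \<sigma>)) < 0"
proof -
  let ?D = "prod_list dims"
  note \<sigma>c = density_op_carrier[OF \<sigma>]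
  obtain P where P: "separable dims P"
    and nearest: "\<And>\<tau>. separable dims \<tau> \<Longrightarrow> hs_dist2 ?D \<sigma> P \<le> hs_dist2 ?D \<sigma> \<tau>"
    using nearest_separable_exists[OF density_op_dim_pos[OF \<sigma>]] by blast
  note Pc = separable_carrier[OF P]
  define W0 where "W0 = P - \<sigma>"
  have W0: "W0 \<in> carrier_mat ?D ?D" "hermitian_mat W0"
    unfolding W0_def using Pc \<sigma>c separable_hermitian[OF P] \<sigma>
    by (auto intro: hermitian_mat_minus simp: density_op_def)
  define ip where "ip X = (\<Sum>a<?D. \<Sum>b<?D. Re (cnj (W0 $$ (a,b)) * X $$ (a,b)))" for X
  define W where "W = W0 - complex_of_real (ip P) \<cdot>\<^sub>m 1\<^sub>m ?D"
  have Wc: "W \<in> carrier_mat ?D ?D" unfolding W_def by (rule minus_carrier_mat) simp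
  have W_trace: "Re (mtrace (W * X)) = ip X - ip P" if "X \<in> carrier_mat ?D ?D" "mtrace X = 1" for X
    unfolding W_def mtrace_mult_minus_scalar_one[OF W0(1) that(1)] mtrace_mult_hermitian[OF W0 that(1)]
    using that(2) by (simp add: ip_def Re_sum)
  have ip_diff: "ip X - ip P =
      - (\<Sum>a<?D. \<Sum>b<?D. Re (cnj (\<sigma> $$ (a,b) - P $$ (a,b)) * (X $$ (a,b) - P $$ (a,b))))"
    for X
    using Pc \<sigma>c unfolding ip_def W0_def
    by (simp add: sum_subtractf sum_negf[symmetric] algebra_simps)
  have "hermitian_mat W"
    unfolding W_def
    by (rule hermitian_mat_minus[OF W0(1) _ W0(2)
          hermitian_mat_smult_real[OF one_carrier_mat hermitian_mat_one]])
      simp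
  moreover have "0 \<le> Re (mtrace (W * \<tau>))" if "separable dims \<tau>" for \<tau>
    using W_trace[OF separable_carrier[OF that] mtrace_separable[OF that]] ip_diff[of \<tau>]
      nearest_separable_obtuse[OF P that nearest] by simp
  moreover have "Re (mtrace (W * \<sigma>)) < 0"
  proof -
    have "ip \<sigma> - ip P = - hs_dist2 ?D \<sigma> P"
      unfolding ip_diff hs_dist2_def Re_cnj_mult_self by simp
    moreover have "hs_dist2 ?D \<sigma> P \<noteq> 0" using hs_dist2_eq_0_iff[OF \<sigma>c Pc] P entangled by blast
    ultimately show ?thesis
      using W_trace[OF \<sigma>c] \<sigma> hs_dist2_nonneg[of ?D \<sigma> P] unfolding density_op_def by simp
  qed
  ultimately show ?thesis unfolding entanglement_witness_def using Wc by blast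
qed

lemma normalized_witness_exists:
  assumes W: "entanglement_witness dims W" and \<sigma>: "\<sigma> \<in> carrier_mat (prod_list dims) (prod_list dims)"
    and neg: "Re (mtrace (W * \<sigma>)) < 0"
  shows "\<exists>W'. normalized_EW dims W' \<and> Re (mtrace (W' * \<sigma>)) < 0"
proof -
  let ?D = "prod_list dims"
  define s where "s = Re (mtrace W)"
  have Wc: "W \<in> carrier_mat ?D ?D" and Wh: "hermitian_mat W"
    and W_sep: "\<And>\<tau>. separable dims \<tau> \<Longrightarrow> 0 \<le> Re (mtrace (W * \<tau>))"
    using W unfolding entanglement_witness_def by auto
  have "0 < s"
  proof (rule ccontr)
    assume "\<not> 0 < s"
    have "W $$ (a,b) = 0" if "a < ?D" "b < ?D" for a b
      using block_positive_entry_bound[OF entanglement_witness_block_positive[OF W] that]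
        \<open>\<not> 0 < s\<close> unfolding s_def by (metis norm_le_zero_iff not_less order_trans)
    then have "mtrace (W * \<sigma>) = 0" unfolding mtrace_mult[OF Wc \<sigma>] by simp
    then show False using neg by simp
  qed
  define W' where "W' = complex_of_real (1 / s) \<cdot>\<^sub>m W"
  have W'c: "W' \<in> carrier_mat ?D ?D" unfolding W'_def using Wc by simp
  have W'_trace: "Re (mtrace (W' * X)) = Re (mtrace (W * X)) / s" if "X \<in> carrier_mat ?D ?D" for X
    unfolding W'_def mult_smult_assoc_mat[OF Wc that] mtrace_smult[OF mult_carrier_mat[OF Wc that]]
    by simp
  have "hermitian_mat W'" unfolding W'_def by (rule hermitian_mat_smult_real[OF Wc Wh])
  moreover have "mtrace W' = 1"
  proof -
    have "mtrace W' = complex_of_real (1 / s) * complex_of_real s"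
      unfolding W'_def mtrace_smult[OF Wc] s_def using mtrace_hermitian_real[OF Wc Wh] by simp
    then show ?thesis using \<open>0 < s\<close> by (simp flip: of_real_mult)
  qed
  moreover have "0 \<le> Re (mtrace (W' * \<tau>))" if "separable dims \<tau>" for \<tau>
    using W_sep[OF that] W'_trace[OF separable_carrier[OF that]] \<open>0 < s\<close> by simp
  moreover have "Re (mtrace (W' * \<sigma>)) < 0" using W'_trace[OF \<sigma>] neg \<open>0 < s\<close>
    by (simp add: divide_neg_pos)
  ultimately show ?thesis unfolding normalized_EW_def entanglement_witness_def using W'c by blast
qed

lemma witnessed_ent_eq_0_iff:
  assumes \<sigma>: "density_op (prod_list dims) \<sigma>"
  shows "witnessed_ent dims \<sigma> = 0 \<longleftrightarrow> separable dims \<sigma>"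
proof
  assume zero: "witnessed_ent dims \<sigma> = 0"
  show "separable dims \<sigma>"
  proof (rule ccontr)
    assume "\<not> separable dims \<sigma>"
    then obtain W where W: "normalized_EW dims W" "Re (mtrace (W * \<sigma>)) < 0"
      using separating_witness_exists[OF \<sigma>] normalized_witness_exists density_op_carrier[OF \<sigma>]
        by metis
    then have "witness_inf dims \<sigma> < 0" using witness_inf_le[OF W(1) density_op_carrier[OF \<sigma>]]
      by simp
    then show False using zero unfolding witnessed_ent_eq by simp
  qed
qed (rule witnessed_ent_separable)

theorem proposition1:
  fixes dims :: "nat list"
  defines "D \<equiv> prod_list dims"
  shows
   "(\<forall>\<sigma>. density_op D \<sigma> \<longrightarrow> (witnessed_ent dims \<sigma> = 0 \<longleftrightarrow> separable dims \<sigma>))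
  \<and> (\<forall>Us \<sigma>. length Us = length dims \<and> (\<forall>k < length dims. unitary_mat (dims ! k) (Us ! k))
        \<and> density_op D \<sigma> \<longrightarrow>
        witnessed_ent dims \<sigma> =
        witnessed_ent dims (kron_list (map mat_adjoint Us) * \<sigma> * kron_list Us))
  \<and> (\<forall>N. mat_norm D N \<longrightarrow> (\<exists>C::real. 0 \<le> C \<and> (\<forall>(\<epsilon>::real) \<rho> \<sigma>. 0 \<le> \<epsilon>
        \<and> density_op D \<rho> \<and> density_op D \<sigma> \<and> N (\<rho> - \<sigma>) \<le> \<epsilon> \<longrightarrow>
        \<bar>witnessed_ent dims \<rho> - witnessed_ent dims \<sigma>\<bar> \<le> C * \<epsilon>)))
  \<and> (\<forall>\<rho> \<sigma> (t::real). density_op D \<rho> \<and> density_op D \<sigma> \<and> 0 \<le> t \<and> t \<le> 1 \<longrightarrow>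
        witnessed_ent dims (complex_of_real t \<cdot>\<^sub>m \<rho> + complex_of_real (1 - t) \<cdot>\<^sub>m \<sigma>)
        \<le> t * witnessed_ent dims \<rho> + (1 - t) * witnessed_ent dims \<sigma>)"
  unfolding D_def
proof (intro conjI allI impI)
  fix \<sigma> assume "density_op (prod_list dims) \<sigma>"
  then show "witnessed_ent dims \<sigma> = 0 \<longleftrightarrow> separable dims \<sigma>" by (rule witnessed_ent_eq_0_iff)
next
  fix Us \<sigma>
  assume "length Us = length dims \<and> (\<forall>k < length dims. unitary_mat (dims ! k) (Us ! k))
    \<and> density_op (prod_list dims) \<sigma>"
  then show "witnessed_ent dims \<sigma> = witnessed_ent dims (kron_list (map mat_adjoint Us) * \<sigma> * kron_list Us)"
    by (intro witnessed_ent_local_unitary_invariant) (auto simp: list_all2_conv_all_nth)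
next
  fix N assume "mat_norm (prod_list dims) N"
  then show "\<exists>C::real. 0 \<le> C \<and> (\<forall>(\<epsilon>::real) \<rho> \<sigma>. 0 \<le> \<epsilon>
    \<and> density_op (prod_list dims) \<rho> \<and> density_op (prod_list dims) \<sigma> \<and> N (\<rho> - \<sigma>) \<le> \<epsilon> \<longrightarrow>
    \<bar>witnessed_ent dims \<rho> - witnessed_ent dims \<sigma>\<bar> \<le> C * \<epsilon>)"
    by (rule witnessed_ent_continuous)
next
  fix \<rho> \<sigma> and t :: real
  assume "density_op (prod_list dims) \<rho> \<and> density_op (prod_list dims) \<sigma> \<and> 0 \<le> t \<and> t \<le> 1"
  then show "witnessed_ent dims (complex_of_real t \<cdot>\<^sub>m \<rho> + complex_of_real (1 - t) \<cdot>\<^sub>m \<sigma>)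
    \<le> t * witnessed_ent dims \<rho> + (1 - t) * witnessed_ent dims \<sigma>"
    by (intro witnessed_ent_convex) auto
qed

end
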